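(* There exist constants $c>0$, $c_1>0$ depending only on $d$ and $a$ (in particular independent of $\eta$, $k$, $m$, $L$, $\bar\mu_0$) such that for all $y,y'\in\Omega_k$ and all $f,f'\in\mathcal L^2(\Omega)$ with $\mathrm{supp} f\subset B_k(y)$ and $\mathrm{supp} f'\subset B_k(y')$, $$|\langle f,G_k(\Omega)f'\rangle|\le c\,e^{-c_1|y-y'|}\,\|f\|_2\|f'\|_2 .$$
   Context: Standing setup. Fix an integer $d\ge1$, an odd integer $L>1$, integers $k\ge1$, $m\ge k$, and set $\eta=L^{-k}$. Let $\Omega=\eta\{0,1,\dots,L^m-1\}^d\subset\eta\mathbb Z^d$ and, for $0\le j\le m$, $\Omega_j=(L^j\eta)\{0,1,\dots,L^{m-j}-1\}^d$ (so $\Omega_k\subset\mathbb Z^d$). $\mathcal L^2(\Omega)$ is the space of complex functions on $\Omega$ with $\langle f,g\rangle=\eta^d\sum_{x\in\Omega}\overline{f(x)}g(x)$, $\|f\|_2^2=\langle f,f\rangle$. For $y\in (L^j\eta)\mathbb Z^d$ let $B_j(y)=\{x\in\eta\mathbb Z^d:\ y_\mu\le x_\mu<y_\mu+L^j\eta,\ \mu=0,\dots,d-1\}$. The averaging operator $Q_{\Omega,j}:\mathcal L^2(\Omega)\to\mathcal L^2(\Omega_j)$ is $(Q_{\Omega,j}f)(y)=L^{-jd}\sum_{x\in B_j(y)}f(x)$ (with $\mathcal L^2(\Omega_j)$ carrying the inner product $(L^j\eta)^d\sum_{y\in\Omega_j}\bar g h$); its adjoint is $(Q_{\Omega,j}^*h)(x)=h(y_x)$,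 $x\in B_j(y_x)$. The Neumann Laplacian is $(\Delta^\eta_\Omega f)(x)=\eta^{-2}\sum_{\mu}\big(f(x+\eta e_\mu)-2f(x)+f(x-\eta e_\mu)\big)$, with $f(x\pm\eta e_\mu)$ replaced by $f(x)$ if $x\pm\eta e_\mu\notin\Omega$. Fix $a\in(0,1]$, $a_j=a\frac{1-L^{-2}}{1-L^{-2j}}$, $\bar\mu_0\ge0$, $\bar\mu_j=L^{2j}\bar\mu_0$, and $G_k(\Omega)=(-\Delta^\eta_\Omega+\bar\mu_k+a_kQ_{\Omega,k}^*Q_{\Omega,k})^{-1}$. *)

theory Defs
  imports "HOL-Analysis.Analysis"
begin

text \<open>The dimension d is CARD('n) for a finite index type 'n.
A point x of eta Z^d is represented by its integer coordinates n :: 'n => int,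
i.e. x = eta * n. Functions on the lattice are maps ('n => int) => complex;
elements of L^2(Omega) are those vanishing outside Omega.\<close>

definition Omega :: "nat \<Rightarrow> nat \<Rightarrow> ('n::finite \<Rightarrow> int) set" where
  "Omega L m = {x. \<forall>\<mu>. 0 \<le> x \<mu> \<and> x \<mu> < int L ^ m}"

text \<open>Omega_j = (L^j eta){0,...,L^(m-j)-1}^d, in eta-units.\<close>
definition Omega_j :: "nat \<Rightarrow> nat \<Rightarrow> nat \<Rightarrow> ('n::finite \<Rightarrow> int) set" where
  "Omega_j L m j = {y \<in> Omega L m. \<forall>\<mu>. int L ^ j dvd y \<mu>}"

definition Block :: "nat \<Rightarrow> nat \<Rightarrow> ('n::finite \<Rightarrow> int) \<Rightarrow> ('n \<Rightarrow> int) set" where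
  "Block L j y = {x. \<forall>\<mu>. y \<mu> \<le> x \<mu> \<and> x \<mu> < y \<mu> + int L ^ j}"

definition L2 :: "('n::finite \<Rightarrow> int) set \<Rightarrow> (('n \<Rightarrow> int) \<Rightarrow> complex) set" where
  "L2 S = {f. \<forall>x. x \<notin> S \<longrightarrow> f x = 0}"

definition inner_L2 :: "real \<Rightarrow> ('n::finite \<Rightarrow> int) set \<Rightarrow> (('n \<Rightarrow> int) \<Rightarrow> complex)
    \<Rightarrow> (('n \<Rightarrow> int) \<Rightarrow> complex) \<Rightarrow> complex" where
  "inner_L2 eta S f g = complex_of_real (eta ^ CARD('n)) * (\<Sum>x\<in>S. cnj (f x) * g x)"

definition norm_L2 :: "real \<Rightarrow> ('n::finite \<Rightarrow> int) set \<Rightarrow> (('n \<Rightarrow> int) \<Rightarrow> complex) \<Rightarrow> real" where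
  "norm_L2 eta S f = sqrt (Re (inner_L2 eta S f f))"

definition neumann_lap :: "real \<Rightarrow> ('n::finite \<Rightarrow> int) set \<Rightarrow> (('n \<Rightarrow> int) \<Rightarrow> complex)
    \<Rightarrow> ('n \<Rightarrow> int) \<Rightarrow> complex" where
  "neumann_lap eta S f x =
     (if x \<in> S then
        complex_of_real (1 / eta ^ 2) *
        (\<Sum>\<mu>\<in>UNIV.
           (let xp = x(\<mu> := x \<mu> + 1); xm = x(\<mu> := x \<mu> - 1) in
             (if xp \<in> S then f xp else f x) - 2 * f x + (if xm \<in> S then f xm else f x)))
      else 0)"

definition Qavg :: "nat \<Rightarrow> nat \<Rightarrow> nat \<Rightarrow> (('n::finite \<Rightarrow> int) \<Rightarrow> complex) \<Rightarrow> ('n \<Rightarrow> int) \<Rightarrow> complex" where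
  "Qavg L m j f y =
     (if y \<in> Omega_j L m j then
        complex_of_real (1 / real L ^ (j * CARD('n))) * (\<Sum>x\<in>Block L j y. f x)
      else 0)"

definition Qadj :: "nat \<Rightarrow> nat \<Rightarrow> nat \<Rightarrow> (('n::finite \<Rightarrow> int) \<Rightarrow> complex) \<Rightarrow> ('n \<Rightarrow> int) \<Rightarrow> complex" where
  "Qadj L m j h x =
     (if x \<in> Omega L m then h (\<lambda>\<mu>. int L ^ j * (x \<mu> div int L ^ j)) else 0)"

definition a_j :: "real \<Rightarrow> nat \<Rightarrow> nat \<Rightarrow> real" where
  "a_j a L j = a * (1 - real L powr (-2)) / (1 - real L powr (- 2 * real j))"

definition mubar_j :: "real \<Rightarrow> nat \<Rightarrow> nat \<Rightarrow> real" where
  "mubar_j mu0 L j = real L ^ (2 * j) * mu0"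

definition eta_of :: "nat \<Rightarrow> nat \<Rightarrow> real" where
  "eta_of L k = real L powr (- real k)"

definition Hop :: "real \<Rightarrow> real \<Rightarrow> nat \<Rightarrow> nat \<Rightarrow> nat \<Rightarrow> (('n::finite \<Rightarrow> int) \<Rightarrow> complex)
    \<Rightarrow> ('n \<Rightarrow> int) \<Rightarrow> complex" where
  "Hop a mu0 L k m f x =
     (if x \<in> Omega L m then
        - neumann_lap (eta_of L k) (Omega L m) f x
        + complex_of_real (mubar_j mu0 L k) * f x
        + complex_of_real (a_j a L k) * Qadj L m k (Qavg L m k f) x
      else 0)"

definition Gk :: "real \<Rightarrow> real \<Rightarrow> nat \<Rightarrow> nat \<Rightarrow> nat \<Rightarrow> (('n::finite \<Rightarrow> int) \<Rightarrow> complex)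
    \<Rightarrow> ('n \<Rightarrow> int) \<Rightarrow> complex" where
  "Gk a mu0 L k m f = (THE g. g \<in> L2 (Omega L m) \<and> Hop a mu0 L k m g = f)"

definition latdist :: "real \<Rightarrow> ('n::finite \<Rightarrow> int) \<Rightarrow> ('n \<Rightarrow> int) \<Rightarrow> real" where
  "latdist eta y y' = sqrt (\<Sum>\<mu>\<in>UNIV. (eta * real_of_int (y \<mu> - y' \<mu>))^2)"

end

theory Submission
  imports Defs "HOL-Library.Function_Algebras"
begin

text \<open>A Combes--Thomas argument. The operator \<open>H = -\<Delta> + \<mu>\<^sub>k + a\<^sub>k Q\<^sup>*Q\<close> is coercive with a constant
  depending only on \<open>d\<close> and \<open>a\<close>: on each block of side \<open>L\<^sup>k\<eta> = 1\<close>, split \<open>v\<close> into its mean, which the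
  averaging term controls, and its fluctuation, which the Dirichlet energy controls by a Poincar\'e
  inequality on the cube. Conjugating \<open>H\<close> by \<open>e\<^sup>w\<close>, with \<open>w = \<alpha> |x - y'|\<^sub>1\<close> in block units, changes each
  bond of the Laplacian by a factor \<open>cosh\<close> of the weight increment and each block average by a factor
  \<open>e\<^sup>O\<^sup>(\<^sup>\<alpha>\<^sup>)\<close>; for small \<open>\<alpha>\<close> the conjugated form stays coercive. This bounds \<open>e\<^sup>w G f'\<close> by
  \<open>\<parallel>f'\<parallel>\<close> up to \<open>e\<^sup>O\<^sup>(\<^sup>\<alpha>\<^sup>)\<close>, since \<open>w\<close> is small on the support of \<open>f'\<close>, while \<open>w \<ge> \<alpha>|y - y'| - O(\<alpha>)\<close> on the
  support of \<open>f\<close>.\<close>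

section \<open>Cubes and the block decomposition of \<open>Omega\<close>\<close>

definition cube :: "('n::finite \<Rightarrow> int) \<Rightarrow> int \<Rightarrow> ('n \<Rightarrow> int) set" where
  "cube c M = {x. \<forall>\<mu>. c \<mu> \<le> x \<mu> \<and> x \<mu> < c \<mu> + M}"

lemma cube_eq_PiE: "cube c M = PiE UNIV (\<lambda>\<mu>. {c \<mu>..<c \<mu> + M})"
  unfolding cube_def PiE_UNIV_domain Pi_def by auto

lemma finite_cube [simp]: "finite (cube c M)"
  unfolding cube_eq_PiE by (rule finite_PiE) auto

lemma card_cube: "M \<ge> 0 \<Longrightarrow> card (cube (c::'n::finite \<Rightarrow> int) M) = nat M ^ CARD('n)"
  unfolding cube_eq_PiE by (simp add: card_PiE)

lemma Block_eq_cube: "Block L j y = cube y (int L ^ j)"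
  unfolding Block_def cube_def by simp

lemma Omega_eq_cube: "Omega L m = cube (\<lambda>_. 0) (int L ^ m)"
  unfolding Omega_def cube_def by simp

lemma finite_Omega [simp]: "finite (Omega L m)"
  unfolding Omega_eq_cube by simp

lemma finite_Omega_j [simp]: "finite (Omega_j L m k)"
  unfolding Omega_j_def by simp

lemma card_Block: "L > 0 \<Longrightarrow> real (card (Block L k (c::'n::finite \<Rightarrow> int))) = real L ^ (k * CARD('n))"
  unfolding Block_eq_cube by (simp add: card_cube power_mult nat_power_eq)

definition corner :: "int \<Rightarrow> ('n \<Rightarrow> int) \<Rightarrow> ('n \<Rightarrow> int)" where
  "corner M x = (\<lambda>\<mu>. M * (x \<mu> div M))"

lemma mem_cube_corner: "M > 0 \<Longrightarrow> x \<in> cube (corner M x) M"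
  unfolding cube_def corner_def
  by (auto simp: mult.commute minus_mod_eq_mult_div[symmetric])

lemma corner_eq_if_mem_cube:
  assumes "M > 0" "\<forall>\<mu>. M dvd c \<mu>" "x \<in> cube c M"
  shows "corner M x = c"
proof
  fix \<mu>
  obtain a where a: "c \<mu> = M * a" using assms(2) by (meson dvdE)
  have "c \<mu> \<le> x \<mu>" "x \<mu> < c \<mu> + M" using assms(3) unfolding cube_def by auto
  then have "0 \<le> x \<mu> - M * a" "x \<mu> - M * a < M" using a by auto
  moreover have "x \<mu> div M = a + (x \<mu> - M * a) div M"
    using div_mult_self1[of M "x \<mu> - M * a" a] assms(1) by (simp add: mult.commute)
  ultimately have "x \<mu> div M = a" by (simp add: div_pos_pos_trivial)
  then show "corner M x \<mu> = c \<mu>" unfolding corner_def using a by simp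
qed

lemma corner_in_Omega_j:
  assumes "L > 0" "k \<le> m" "x \<in> Omega L m"
  shows "corner (int L ^ k) x \<in> Omega_j L m k"
proof -
  have M: "int L ^ k > 0" using assms by simp
  have "0 \<le> corner (int L ^ k) x \<mu> \<and> corner (int L ^ k) x \<mu> < int L ^ m" for \<mu>
  proof -
    have "corner (int L ^ k) x \<mu> \<le> x \<mu>"
      using mem_cube_corner[OF M, of x] unfolding cube_def by auto
    moreover have "0 \<le> corner (int L ^ k) x \<mu>"
      using M assms(3) unfolding Omega_def corner_def by (simp add: pos_imp_zdiv_nonneg_iff)
    moreover have "x \<mu> < int L ^ m" using assms(3) unfolding Omega_def by auto
    ultimately show ?thesis by linarith
  qed
  then show ?thesis unfolding Omega_j_def Omega_def corner_def by auto
qed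

lemma Block_subset_Omega:
  assumes "L > 0" "k \<le> m" "c \<in> Omega_j L m k"
  shows "Block L k c \<subseteq> Omega L m"
proof
  fix x assume x: "x \<in> Block L k c"
  have "0 \<le> x \<mu> \<and> x \<mu> < int L ^ m" for \<mu>
  proof -
    obtain a where a: "c \<mu> = int L ^ k * a"
      using assms(3) unfolding Omega_j_def by (auto elim!: dvdE)
    have P: "int L ^ m = int L ^ k * int L ^ (m - k)"
      using assms(2) by (simp add: power_add[symmetric])
    have c: "0 \<le> c \<mu>" "c \<mu> < int L ^ m" using assms(3) unfolding Omega_j_def Omega_def by auto
    then have "a + 1 \<le> int L ^ (m - k)"
      using a P assms(1) by (simp add: zero_le_mult_iff)
    then have "int L ^ k * (a + 1) \<le> int L ^ k * int L ^ (m - k)"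
      using assms(1) by (intro mult_left_mono) auto
    then have "c \<mu> + int L ^ k \<le> int L ^ m" using a P by (simp add: algebra_simps)
    moreover have "c \<mu> \<le> x \<mu>" "x \<mu> < c \<mu> + int L ^ k" using x unfolding Block_def by auto
    ultimately show ?thesis using c by linarith
  qed
  then show "x \<in> Omega L m" unfolding Omega_def by auto
qed

lemma Omega_corner_fiber:
  assumes "L > 0" "k \<le> m" "c \<in> Omega_j L m k"
  shows "{x \<in> Omega L m. corner (int L ^ k) x = c} = Block L k c"
proof (intro set_eqI iffI)
  fix x assume "x \<in> {x \<in> Omega L m. corner (int L ^ k) x = c}"
  then show "x \<in> Block L k c"
    using mem_cube_corner[of "int L ^ k" x] assms(1) by (auto simp: Block_eq_cube)
next
  fix x assume x: "x \<in> Block L k c"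
  then show "x \<in> {x \<in> Omega L m. corner (int L ^ k) x = c}"
    using Block_subset_Omega[OF assms] assms unfolding Omega_j_def
    by (auto intro!: corner_eq_if_mem_cube simp: Block_eq_cube)
qed

lemma corner_eq_if_mem_Block:
  "L > 0 \<Longrightarrow> k \<le> m \<Longrightarrow> c \<in> Omega_j L m k \<Longrightarrow> x \<in> Block L k c \<Longrightarrow> corner (int L ^ k) x = c"
  using Omega_corner_fiber by blast

lemma sum_Omega_by_Blocks:
  assumes "L > 0" "k \<le> m"
  shows "(\<Sum>x\<in>Omega L m. F x) = (\<Sum>c\<in>Omega_j L m k. \<Sum>x\<in>Block L k c. F x)"
proof -
  have "sum F (Omega L m) = (\<Sum>c\<in>Omega_j L m k. sum F {x \<in> Omega L m. corner (int L ^ k) x = c})"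
    by (rule sum.group[symmetric]) (use corner_in_Omega_j[OF assms] in auto)
  also have "\<dots> = (\<Sum>c\<in>Omega_j L m k. \<Sum>x\<in>Block L k c. F x)"
    by (intro sum.cong refl) (simp add: Omega_corner_fiber[OF assms])
  finally show ?thesis .
qed

section \<open>A discrete Poincar\'e inequality on cubes\<close>

definition sh :: "'n \<Rightarrow> ('n \<Rightarrow> int) \<Rightarrow> ('n \<Rightarrow> int)" where
  "sh \<mu> x = x(\<mu> := x \<mu> + 1)"

definition dn :: "'n \<Rightarrow> ('n \<Rightarrow> int) \<Rightarrow> ('n \<Rightarrow> int)" where
  "dn \<mu> x = x(\<mu> := x \<mu> - 1)"

lemma sh_dn [simp]: "sh \<mu> (dn \<mu> x) = x" "dn \<mu> (sh \<mu> x) = x"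
  by (auto simp: sh_def dn_def fun_eq_iff)

lemma inj_sh: "inj (sh \<mu>)"
  by (metis injI sh_dn(2))

definition dir_energy :: "('n::finite \<Rightarrow> int) set \<Rightarrow> 'n \<Rightarrow> (('n \<Rightarrow> int) \<Rightarrow> complex) \<Rightarrow> real" where
  "dir_energy S i v = (\<Sum>x\<in>{x \<in> S. sh i x \<in> S}. (cmod (v x - v (sh i x)))^2)"

definition energy :: "('n::finite \<Rightarrow> int) set \<Rightarrow> (('n \<Rightarrow> int) \<Rightarrow> complex) \<Rightarrow> real" where
  "energy S v = (\<Sum>i\<in>UNIV. dir_energy S i v)"

lemma dir_energy_nonneg: "dir_energy S i v \<ge> 0"
  unfolding dir_energy_def by (intro sum_nonneg) auto

lemma energy_nonneg: "energy S v \<ge> 0"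
  unfolding energy_def by (intro sum_nonneg dir_energy_nonneg)

lemma dir_energy_le_energy: "dir_energy S i v \<le> energy S v"
  unfolding energy_def by (rule member_le_sum) (auto intro: dir_energy_nonneg)

lemma dir_energy_eq_sum_if:
  "finite S \<Longrightarrow> dir_energy S i v = (\<Sum>x\<in>S. if sh i x \<in> S then (cmod (v x - v (sh i x)))^2 else 0)"
  unfolding dir_energy_def by (simp add: sum.inter_filter)

lemma norm_diff_le_sum_steps:
  fixes w :: "int \<Rightarrow> complex"
  assumes "s \<le> t"
  shows "cmod (w t - w s) \<le> (\<Sum>r\<in>{s..<t}. cmod (w r - w (r + 1)))"
  using assms
proof (induction t rule: int_ge_induct)
  case base
  then show ?case by simp
next
  case (step t)
  have "cmod (w (t + 1) - w s) \<le> cmod (w t - w s) + cmod (w t - w (t + 1))"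
    using norm_triangle_ineq4[of "w t - w s" "w t - w (t + 1)"] by simp
  also have "\<dots> \<le> (\<Sum>r\<in>{s..<t}. cmod (w r - w (r + 1))) + cmod (w t - w (t + 1))"
    using step.IH by simp
  also have "\<dots> = (\<Sum>r\<in>{s..<t + 1}. cmod (w r - w (r + 1)))"
  proof -
    have "{s..<t + 1} = insert t {s..<t}" using step.hyps by auto
    then show ?thesis by simp
  qed
  finally show ?case .
qed

lemma line_norm_diff_sq_le:
  fixes w :: "int \<Rightarrow> complex"
  assumes "M \<ge> 0" "s \<in> {c..<c+M}" "t \<in> {c..<c+M}"
  shows "(cmod (w s - w t))^2 \<le> real_of_int M * (\<Sum>r\<in>{c..<c+M-1}. (cmod (w r - w (r+1)))^2)"
proof -
  let ?A = "\<Sum>r\<in>{c..<c+M-1}. cmod (w r - w (r+1))"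
  have steps: "cmod (w q - w p) \<le> ?A" if "p \<le> q" "p \<in> {c..<c+M}" "q \<in> {c..<c+M}" for p q
  proof -
    have "cmod (w q - w p) \<le> (\<Sum>r\<in>{p..<q}. cmod (w r - w (r+1)))"
      by (rule norm_diff_le_sum_steps) fact
    also have "\<dots> \<le> ?A" using that by (intro sum_mono2) auto
    finally show ?thesis .
  qed
  have "cmod (w s - w t) \<le> ?A"
    using steps[of s t] steps[of t s] assms by (cases "s \<le> t") (auto simp: norm_minus_commute)
  then have "(cmod (w s - w t))^2 \<le> ?A^2" by (intro power_mono) auto
  also have "\<dots> \<le> (\<Sum>r\<in>{c..<c+M-1}. (cmod (w r - w (r+1)))^2) * real (card {c..<c+M-1})"
    by (rule sum_squared_le_sum_of_squares)
  also have "\<dots> \<le> real_of_int M * (\<Sum>r\<in>{c..<c+M-1}. (cmod (w r - w (r+1)))^2)"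
    using assms(1) by (subst mult.commute, intro mult_right_mono sum_nonneg) auto
  finally show ?thesis .
qed

lemma line_poincare:
  fixes w :: "int \<Rightarrow> complex"
  assumes "M \<ge> 0"
  shows "(\<Sum>s\<in>{c..<c+M}. \<Sum>t\<in>{c..<c+M}. (cmod (w s - w t))^2)
     \<le> real_of_int M ^ 3 * (\<Sum>r\<in>{c..<c+M-1}. (cmod (w r - w (r+1)))^2)"
proof -
  let ?D = "\<Sum>r\<in>{c..<c+M-1}. (cmod (w r - w (r+1)))^2"
  have "(\<Sum>s\<in>{c..<c+M}. \<Sum>t\<in>{c..<c+M}. (cmod (w s - w t))^2)
      \<le> (\<Sum>s\<in>{c..<c+M}. \<Sum>t\<in>{c..<c+M}. real_of_int M * ?D)"
    by (intro sum_mono line_norm_diff_sq_le assms) auto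
  also have "\<dots> = real_of_int M ^ 3 * ?D" using assms by (simp add: power3_eq_cube)
  finally show ?thesis .
qed

definition cube_face :: "('n::finite \<Rightarrow> int) \<Rightarrow> int \<Rightarrow> 'n \<Rightarrow> ('n \<Rightarrow> int) set" where
  "cube_face c M i = {x \<in> cube c M. x i = c i}"

lemma sum_cube_by_lines:
  assumes "M > 0"
  shows "(\<Sum>x\<in>cube c M. F x) = (\<Sum>x0\<in>cube_face c M i. \<Sum>s\<in>{c i..<c i + M}. F (x0(i := s)))"
proof -
  have "(\<Sum>x0\<in>cube_face c M i. \<Sum>s\<in>{c i..<c i + M}. F (x0(i := s)))
      = (\<Sum>(x0,s)\<in>cube_face c M i \<times> {c i..<c i + M}. F (x0(i := s)))"
    by (rule sum.cartesian_product)
  also have "\<dots> = (\<Sum>x\<in>cube c M. F x)"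
    by (rule sum.reindex_bij_witness[where i = "\<lambda>x. (x(i := c i), x i)" and j = "\<lambda>(x0,s). x0(i := s)"])
      (use assms in \<open>auto simp: cube_face_def cube_def\<close>)
  finally show ?thesis by simp
qed

lemma sum_cube_coordinate:
  assumes "M > 0"
  shows "(\<Sum>z\<in>cube c M. h (z i)) = real (card (cube_face c M i)) * (\<Sum>t\<in>{c i..<c i + M}. h t)"
  by (simp add: sum_cube_by_lines[OF assms, where c = c and i = i])

lemma card_cube_face:
  assumes "M > 0"
  shows "real (card (cube_face (c::'n::finite \<Rightarrow> int) M i)) * real_of_int M = real_of_int M ^ CARD('n)"
  using sum_cube_coordinate[OF assms, where h = "\<lambda>_. 1" and c = c and i = i] card_cube[of M c] assms
  by simp

lemma dir_energy_cube:
  assumes "M > 0"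
  shows "dir_energy (cube c M) i v = (\<Sum>x0\<in>cube_face c M i. \<Sum>r\<in>{c i..<c i + M - 1}.
            (cmod (v (x0(i := r)) - v (x0(i := r + 1))))^2)"
proof -
  have shift_in: "sh i x \<in> cube c M \<longleftrightarrow> x i + 1 < c i + M" if "x \<in> cube c M" for x
    using that unfolding cube_def sh_def by (auto dest!: spec[of _ i])
  have line: "(\<Sum>s\<in>{c i..<c i + M}. if s + 1 < c i + M
                then (cmod (v (x0(i := s)) - v (x0(i := s + 1))))^2 else 0)
      = (\<Sum>r\<in>{c i..<c i + M - 1}. (cmod (v (x0(i := r)) - v (x0(i := r + 1))))^2)" for x0
  proof -
    have "{s \<in> {c i..<c i + M}. s + 1 < c i + M} = {c i..<c i + M - 1}" by auto
    then show ?thesis by (simp only: sum.inter_filter[symmetric] finite_atLeastLessThan_int)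
  qed
  have "dir_energy (cube c M) i v
      = (\<Sum>x\<in>cube c M. if x i + 1 < c i + M then (cmod (v x - v (sh i x)))^2 else 0)"
    unfolding dir_energy_eq_sum_if[OF finite_cube] by (intro sum.cong refl) (simp add: shift_in)
  also have "\<dots> = (\<Sum>x0\<in>cube_face c M i. \<Sum>s\<in>{c i..<c i + M}. if (x0(i := s)) i + 1 < c i + M
                then (cmod (v (x0(i := s)) - v (sh i (x0(i := s)))))^2 else 0)"
    by (rule sum_cube_by_lines[OF assms])
  also have "\<dots> = (\<Sum>x0\<in>cube_face c M i. \<Sum>s\<in>{c i..<c i + M}. if s + 1 < c i + M
                then (cmod (v (x0(i := s)) - v (x0(i := s + 1))))^2 else 0)"
    by (simp add: sh_def cong: if_cong)
  also have "\<dots> = (\<Sum>x0\<in>cube_face c M i. \<Sum>r\<in>{c i..<c i + M - 1}.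
            (cmod (v (x0(i := r)) - v (x0(i := r + 1))))^2)"
    by (simp only: line)
  finally show ?thesis .
qed

lemma sum_line_diffs_le_dir_energy:
  assumes "M > 0"
  shows "(\<Sum>x\<in>cube c M. \<Sum>t\<in>{c i..<c i + M}. (cmod (v x - v (x(i := t))))^2)
       \<le> real_of_int M ^ 3 * dir_energy (cube c M) i v"
proof -
  have "(\<Sum>x\<in>cube c M. \<Sum>t\<in>{c i..<c i + M}. (cmod (v x - v (x(i := t))))^2)
      = (\<Sum>x0\<in>cube_face c M i. \<Sum>s\<in>{c i..<c i + M}. \<Sum>t\<in>{c i..<c i + M}.
           (cmod (v (x0(i := s)) - v (x0(i := t))))^2)"
    by (subst sum_cube_by_lines[OF assms, of _ _ i]) simp
  also have "\<dots> \<le> (\<Sum>x0\<in>cube_face c M i. real_of_int M ^ 3 * (\<Sum>r\<in>{c i..<c i + M - 1}.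
            (cmod (v (x0(i := r)) - v (x0(i := r + 1))))^2))"
    by (intro sum_mono line_poincare[where w = "\<lambda>s. v (x0(i := s))" for x0, simplified])
      (use assms in auto)
  also have "\<dots> = real_of_int M ^ 3 * dir_energy (cube c M) i v"
    by (simp add: dir_energy_cube[OF assms] sum_distrib_left)
  finally show ?thesis .
qed

lemma sum_coordinate_diffs_le_dir_energy:
  assumes "M > 0"
  shows "(\<Sum>x\<in>cube c M. \<Sum>z\<in>cube (c::'n::finite \<Rightarrow> int) M. (cmod (v x - v (x(i := z i))))^2)
     \<le> real_of_int M ^ (CARD('n) + 2) * dir_energy (cube c M) i v"
proof -
  let ?F = "real (card (cube_face c M i))"
  have "(\<Sum>x\<in>cube c M. \<Sum>z\<in>cube c M. (cmod (v x - v (x(i := z i))))^2)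
      = (\<Sum>x\<in>cube c M. ?F * (\<Sum>t\<in>{c i..<c i + M}. (cmod (v x - v (x(i := t))))^2))"
    by (intro sum.cong refl sum_cube_coordinate[OF assms])
  also have "\<dots> = ?F * (\<Sum>x\<in>cube c M. \<Sum>t\<in>{c i..<c i + M}. (cmod (v x - v (x(i := t))))^2)"
    by (simp add: sum_distrib_left)
  also have "\<dots> \<le> ?F * (real_of_int M ^ 3 * dir_energy (cube c M) i v)"
    by (intro mult_left_mono sum_line_diffs_le_dir_energy assms) auto
  also have "\<dots> = (?F * real_of_int M) * real_of_int M ^ 2 * dir_energy (cube c M) i v"
    by (simp add: power3_eq_cube power2_eq_square mult_ac)
  also have "\<dots> = real_of_int M ^ (CARD('n) + 2) * dir_energy (cube c M) i v"
    by (simp add: card_cube_face[OF assms] power_add power2_eq_square)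
  finally show ?thesis .
qed

text \<open>Moving from \<open>x\<close> to \<open>z\<close> one coordinate at a time reduces the Poincar\'e inequality to the
  one-directional one.\<close>

definition mix :: "'n set \<Rightarrow> ('n \<Rightarrow> int) \<Rightarrow> ('n \<Rightarrow> int) \<Rightarrow> ('n \<Rightarrow> int)" where
  "mix J x z = (\<lambda>\<mu>. if \<mu> \<in> J then z \<mu> else x \<mu>)"

lemma mix_in_cube: "x \<in> cube c M \<Longrightarrow> z \<in> cube c M \<Longrightarrow> mix J x z \<in> cube c M"
  unfolding cube_def mix_def by auto

lemma mix_mix: "mix J (mix J x z) (mix J z x) = x"
  by (auto simp: mix_def fun_eq_iff)

lemma sum_cube_pairs_mix:
  assumes "i \<notin> J"
  shows "(\<Sum>x\<in>cube c M. \<Sum>z\<in>cube c M. \<phi> (mix J x z) ((mix J x z)(i := z i)))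
       = (\<Sum>x\<in>cube c M. \<Sum>z\<in>cube c M. \<phi> x (x(i := z i)))"
proof -
  have swap: "(mix J z x) i = z i" for x z using assms by (simp add: mix_def)
  have "(\<Sum>(x,z)\<in>cube c M \<times> cube c M. \<phi> (mix J x z) ((mix J x z)(i := z i)))
      = (\<Sum>(x,z)\<in>cube c M \<times> cube c M. \<phi> x (x(i := z i)))"
    by (rule sum.reindex_bij_witness[where i = "\<lambda>(x,z). (mix J x z, mix J z x)"
          and j = "\<lambda>(x,z). (mix J x z, mix J z x)"])
      (auto simp: mix_mix mix_in_cube swap)
  then show ?thesis by (simp add: sum.cartesian_product)
qed

lemma norm_diff_sq_triangle:
  "(cmod (a - (c::complex)))^2 \<le> 2 * (cmod (a - b))^2 + 2 * (cmod (b - c))^2"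
proof -
  have "cmod (a - c) \<le> cmod (a - b) + cmod (b - c)"
    by (rule norm_diff_triangle_ineq[of a b b c, simplified])
  then have "(cmod (a - c))^2 \<le> (cmod (a - b) + cmod (b - c))^2" by (intro power_mono) auto
  also have "\<dots> \<le> 2 * (cmod (a - b))^2 + 2 * (cmod (b - c))^2"
    using sum_squares_bound[of "cmod (a - b)" "cmod (b - c)"] by (simp add: power2_sum)
  finally show ?thesis .
qed

lemma mix_poincare:
  assumes "M > 0" "finite J"
  shows "(\<Sum>x\<in>cube c M. \<Sum>z\<in>cube (c::'n::finite \<Rightarrow> int) M. (cmod (v x - v (mix J x z)))^2)
     \<le> 4 ^ card J * real_of_int M ^ (CARD('n) + 2) * energy (cube c M) v"
  using assms(2)
proof (induction J rule: finite_induct)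
  case empty
  then show ?case using assms(1) energy_nonneg[of "cube c M" v] by (simp add: mix_def)
next
  case (insert i J)
  let ?K = "real_of_int M ^ (CARD('n) + 2) * energy (cube c M) v"
  let ?P = "\<lambda>J. \<Sum>x\<in>cube c M. \<Sum>z\<in>cube c M. (cmod (v x - v (mix J x z)))^2"
  have K: "?K \<ge> 0" using assms(1) energy_nonneg[of "cube c M" v] by simp
  have mix_insert: "mix (insert i J) x z = (mix J x z)(i := z i)" for x z
    by (auto simp: mix_def)
  have "?P (insert i J)
      \<le> (\<Sum>x\<in>cube c M. \<Sum>z\<in>cube c M. 2 * (cmod (v x - v (mix J x z)))^2
             + 2 * (cmod (v (mix J x z) - v ((mix J x z)(i := z i))))^2)"
    unfolding mix_insert by (intro sum_mono norm_diff_sq_triangle)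
  also have "\<dots> = 2 * ?P J
      + 2 * (\<Sum>x\<in>cube c M. \<Sum>z\<in>cube c M. (cmod (v (mix J x z) - v ((mix J x z)(i := z i))))^2)"
    by (simp add: sum.distrib sum_distrib_left)
  also have "\<dots> = 2 * ?P J
      + 2 * (\<Sum>x\<in>cube c M. \<Sum>z\<in>cube c M. (cmod (v x - v (x(i := z i))))^2)"
    by (simp only: sum_cube_pairs_mix[OF insert(2), where \<phi> = "\<lambda>p q. (cmod (v p - v q))^2"])
  also have "\<dots> \<le> 2 * (4 ^ card J * ?K) + 2 * ?K"
  proof -
    have "real_of_int M ^ (CARD('n) + 2) * dir_energy (cube c M) i v \<le> ?K"
      using assms(1) by (intro mult_left_mono dir_energy_le_energy) auto
    then show ?thesis
      using insert.IH sum_coordinate_diffs_le_dir_energy[OF assms(1), where c = c and v = v and i = i]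
      by (simp add: mult.assoc)
  qed
  also have "\<dots> \<le> 4 ^ card (insert i J) * ?K"
  proof -
    have "2 * 4 ^ card J + 2 \<le> (4::real) ^ card (insert i J)"
      using insert(1,2) one_le_power[of "4::real" "card J"] by simp
    from mult_right_mono[OF this K] show ?thesis by (simp add: distrib_right mult.assoc)
  qed
  finally show ?case by (simp add: mult.assoc)
qed

lemma cube_poincare:
  assumes "M > 0"
  shows "(\<Sum>x\<in>cube c M. \<Sum>z\<in>cube (c::'n::finite \<Rightarrow> int) M. (cmod (v x - v z))^2)
     \<le> 4 ^ CARD('n) * real_of_int M ^ (CARD('n) + 2) * energy (cube c M) v"
proof -
  have "mix UNIV x z = z" for x z :: "'n \<Rightarrow> int" by (simp add: mix_def)
  then show ?thesis using mix_poincare[OF assms, where J = "UNIV :: 'n set"] by simp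
qed

section \<open>The operator \<open>Hop\<close> and its quadratic form\<close>

definition graph_lap :: "('n::finite \<Rightarrow> int) set \<Rightarrow> (('n \<Rightarrow> int) \<Rightarrow> complex) \<Rightarrow> ('n \<Rightarrow> int) \<Rightarrow> complex" where
  "graph_lap S g x = (\<Sum>\<mu>\<in>UNIV. (if sh \<mu> x \<in> S then g x - g (sh \<mu> x) else 0)
                              + (if dn \<mu> x \<in> S then g x - g (dn \<mu> x) else 0))"

lemma neumann_lap_eq_graph_lap:
  assumes "x \<in> S"
  shows "neumann_lap eta S f x = - complex_of_real (1 / eta ^ 2) * graph_lap S f x"
proof -
  have "(let xp = x(\<mu> := x \<mu> + 1); xm = x(\<mu> := x \<mu> - 1) in
             (if xp \<in> S then f xp else f x) - 2 * f x + (if xm \<in> S then f xm else f x))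
      = - ((if sh \<mu> x \<in> S then f x - f (sh \<mu> x) else 0)
           + (if dn \<mu> x \<in> S then f x - f (dn \<mu> x) else 0))" for \<mu>
    unfolding Let_def sh_def dn_def by (auto simp: algebra_simps)
  then have "(\<Sum>\<mu>\<in>UNIV. (let xp = x(\<mu> := x \<mu> + 1); xm = x(\<mu> := x \<mu> - 1) in
             (if xp \<in> S then f xp else f x) - 2 * f x + (if xm \<in> S then f xm else f x)))
      = - graph_lap S f x"
    unfolding graph_lap_def by (simp only: sum_negf[symmetric])
  then show ?thesis using assms unfolding neumann_lap_def by simp
qed

lemma graph_lap_add: "graph_lap S (\<lambda>y. f y + g y) x = graph_lap S f x + graph_lap S g x"
  unfolding graph_lap_def sum.distrib[symmetric] by (rule sum.cong) (auto simp: algebra_simps)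

lemma graph_lap_scale: "graph_lap S (\<lambda>y. c * f y) x = c * graph_lap S f x"
  unfolding graph_lap_def sum_distrib_left by (rule sum.cong) (auto simp: algebra_simps)

text \<open>Summation by parts: each bond \<open>{x, sh \<mu> x}\<close> of \<open>S\<close> is seen once from each of its ends.\<close>

lemma sum_cnj_graph_lap:
  assumes "finite S"
  shows "(\<Sum>x\<in>S. cnj (u x) * graph_lap S g x)
       = (\<Sum>\<mu>\<in>UNIV. \<Sum>x\<in>{x \<in> S. sh \<mu> x \<in> S}. (cnj (u x) - cnj (u (sh \<mu> x))) * (g x - g (sh \<mu> x)))"
proof -
  have bonds: "(\<Sum>x\<in>S. cnj (u x) * ((if sh \<mu> x \<in> S then g x - g (sh \<mu> x) else 0)
                                    + (if dn \<mu> x \<in> S then g x - g (dn \<mu> x) else 0)))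
     = (\<Sum>x\<in>{x \<in> S. sh \<mu> x \<in> S}. (cnj (u x) - cnj (u (sh \<mu> x))) * (g x - g (sh \<mu> x)))" for \<mu>
  proof -
    have up: "(\<Sum>x\<in>S. cnj (u x) * (if sh \<mu> x \<in> S then g x - g (sh \<mu> x) else 0))
        = (\<Sum>x\<in>{x \<in> S. sh \<mu> x \<in> S}. cnj (u x) * (g x - g (sh \<mu> x)))"
      using assms by (simp add: sum.inter_filter[symmetric] if_distrib cong: if_cong)
    have "(\<Sum>x\<in>S. cnj (u x) * (if dn \<mu> x \<in> S then g x - g (dn \<mu> x) else 0))
        = (\<Sum>x\<in>{x \<in> S. dn \<mu> x \<in> S}. cnj (u x) * (g x - g (dn \<mu> x)))"
      using assms by (simp add: sum.inter_filter[symmetric] if_distrib cong: if_cong)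
    also have "\<dots> = (\<Sum>x\<in>{x \<in> S. sh \<mu> x \<in> S}. cnj (u (sh \<mu> x)) * (g (sh \<mu> x) - g x))"
      by (rule sum.reindex_bij_witness[where i = "sh \<mu>" and j = "dn \<mu>"]) auto
    finally show ?thesis
      unfolding distrib_left sum.distrib up by (simp add: sum.distrib[symmetric] algebra_simps)
  qed
  show ?thesis
    unfolding graph_lap_def sum_distrib_left by (subst sum.swap) (simp only: bonds)
qed

lemma eta_of_eq: "L > 0 \<Longrightarrow> eta_of L k = 1 / real L ^ k"
  unfolding eta_of_def by (simp add: powr_minus powr_realpow divide_inverse)

lemma Qadj_Qavg_eq:
  assumes "L > 0" "k \<le> m" "x \<in> Omega L m"
  shows "Qadj L m k (Qavg L m k g) (x::'n::finite \<Rightarrow> int)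
       = complex_of_real (1 / real L ^ (k * CARD('n))) * (\<Sum>z\<in>Block L k (corner (int L ^ k) x). g z)"
  using assms corner_in_Omega_j[OF assms] unfolding Qadj_def Qavg_def corner_def by simp

lemma Hop_eq:
  assumes "L > 0" "k \<le> m" "x \<in> Omega L m"
  shows "Hop a mu0 L k m g (x::'n::finite \<Rightarrow> int)
     = complex_of_real (real L ^ (2*k)) * graph_lap (Omega L m) g x
       + complex_of_real (mubar_j mu0 L k) * g x
       + complex_of_real (a_j a L k) * (complex_of_real (1 / real L ^ (k * CARD('n))) *
            (\<Sum>z\<in>Block L k (corner (int L ^ k) x). g z))"
proof -
  have "1 / (eta_of L k)^2 = real L ^ (2*k)"
    using assms(1) by (simp add: eta_of_eq power_mult power_divide mult.commute)
  then show ?thesis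
    using assms neumann_lap_eq_graph_lap[OF assms(3), of "eta_of L k" g]
    unfolding Hop_def by (simp add: Qadj_Qavg_eq)
qed

lemma Hop_in_L2: "Hop a mu0 L k m f \<in> L2 (Omega L m)"
  unfolding L2_def Hop_def by simp

section \<open>Conjugation by an exponential weight\<close>

lemma Re_cnj_self: "Re (cnj z * z) = (cmod z)^2"
  by (cases z) (simp add: cmod_power2, simp add: power2_eq_square)

lemma norm_diff_sq: "(cmod (a - b))^2 = (cmod a)^2 + (cmod b)^2 - 2 * Re (cnj a * b)"
  by (cases a; cases b) (simp add: cmod_power2, simp add: power2_eq_square algebra_simps)

lemma Re_cnj_le: "Re (cnj a * b) \<le> cmod a * cmod b"
  using complex_Re_le_cmod[of "cnj a * b"] by (simp add: norm_mult)

lemma exp_add_exp_neg_le: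
  fixes s :: real
  assumes "\<bar>s\<bar> \<le> 1"
  shows "exp s + exp (-s) - 2 \<le> 2 * s^2"
proof -
  have *: "exp t + exp (-t) - 2 \<le> 2 * t^2" if "0 \<le> t" "t \<le> 1" for t :: real
  proof -
    have "1 \<le> (1 + t) * (1 - t + t^2)" using that by (simp add: algebra_simps power2_eq_square)
    also have "\<dots> \<le> exp t * (1 - t + t^2)"
    proof (rule mult_right_mono)
      show "0 \<le> 1 - t + t^2" using sum_squares_bound[of t 1] that by simp
    qed (rule exp_ge_add_one_self)
    finally have "exp (-t) \<le> 1 - t + t^2" by (simp add: exp_minus field_simps)
    then show ?thesis using exp_bound[OF that] by simp
  qed
  show ?thesis
    using *[of s] *[of "-s"] assms by (cases "s \<ge> 0") auto
qed

lemma abs_exp_minus_one_le: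
  fixes s :: real
  assumes "\<bar>s\<bar> \<le> 1"
  shows "\<bar>exp s - 1\<bar> \<le> 2 * \<bar>s\<bar>"
proof (cases "s \<ge> 0")
  case True
  then have "s^2 \<le> s" using assms by (simp add: power2_eq_square mult_left_le_one_le)
  then show ?thesis using True exp_bound[of s] assms by simp
next
  case False
  then have "exp s \<le> 1" by simp
  moreover have "1 - exp s \<le> - (2 * s)" using False exp_ge_add_one_self[of s] by linarith
  ultimately show ?thesis by simp
qed

text \<open>The bond equals \<open>|a - b|\<^sup>2 - 2 (cosh (s\<^sub>1 - s\<^sub>2) - 1) Re (cnj a * b)\<close>: the error is quadratic in
  the weight increment.\<close>

lemma Re_conj_bond_ge:
  fixes a b :: complex and s1 s2 t :: real
  assumes "\<bar>s1 - s2\<bar> \<le> t" "t \<le> 1"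
  shows "Re ((cnj (of_real (exp s1) * a) - cnj (of_real (exp s2) * b))
              * (of_real (exp (-s1)) * a - of_real (exp (-s2)) * b))
         \<ge> (cmod (a - b))^2 - t^2 * ((cmod a)^2 + (cmod b)^2)"
proof -
  define f where "f = exp (s1 - s2) + exp (- (s1 - s2)) - 2"
  have id: "Re ((cnj (of_real p * a) - cnj (of_real q * b)) * (of_real (1/p) * a - of_real (1/q) * b))
       = (cmod (a - b))^2 - (p/q + q/p - 2) * Re (cnj a * b)" if "p > 0" "q > 0" for p q
    using that by (cases a; cases b) (simp add: cmod_power2, simp add: field_simps power2_eq_square)
  have "p/q + q/p - 2 = f" if "p = exp s1" "q = exp s2" for p q
    unfolding f_def that by (simp add: exp_diff exp_minus inverse_eq_divide)
  then have id: "Re ((cnj (of_real (exp s1) * a) - cnj (of_real (exp s2) * b))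
              * (of_real (exp (-s1)) * a - of_real (exp (-s2)) * b))
         = (cmod (a - b))^2 - f * Re (cnj a * b)"
    using id[of "exp s1" "exp s2"] by (simp add: exp_minus inverse_eq_divide)
  have f0: "0 \<le> f"
    using exp_ge_add_one_self[of "s1 - s2"] exp_ge_add_one_self[of "-(s1 - s2)"] unfolding f_def
    by linarith
  have "f \<le> 2 * (s1 - s2)^2" unfolding f_def by (rule exp_add_exp_neg_le) (use assms in linarith)
  also have "\<dots> \<le> 2 * t^2"
    using power_mono[OF assms(1), of 2] by simp
  finally have f2: "f \<le> 2 * t^2" .
  have "f * Re (cnj a * b) \<le> f * (cmod a * cmod b)" by (rule mult_left_mono[OF Re_cnj_le f0])
  also have "\<dots> \<le> (2 * t^2) * (cmod a * cmod b)" by (rule mult_right_mono[OF f2]) simp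
  also have "\<dots> \<le> t^2 * ((cmod a)^2 + (cmod b)^2)"
    using mult_left_mono[OF sum_squares_bound[of "cmod a" "cmod b"], of "t^2"] by simp
  finally show ?thesis unfolding id by linarith
qed

lemma Re_conj_graph_lap_ge:
  fixes v :: "('n::finite \<Rightarrow> int) \<Rightarrow> complex" and w :: "('n \<Rightarrow> int) \<Rightarrow> real"
  assumes S: "finite S" and w: "\<And>x \<mu>. x \<in> S \<Longrightarrow> sh \<mu> x \<in> S \<Longrightarrow> \<bar>w x - w (sh \<mu> x)\<bar> \<le> t"
    and t: "t \<le> 1"
  shows "Re (\<Sum>x\<in>S. cnj (of_real (exp (w x)) * v x) * graph_lap S (\<lambda>z. of_real (exp (- w z)) * v z) x)
       \<ge> energy S v - 2 * real CARD('n) * t^2 * (\<Sum>x\<in>S. (cmod (v x))^2)"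
proof -
  let ?N = "\<Sum>x\<in>S. (cmod (v x))^2"
  let ?B = "\<lambda>\<mu>. {x \<in> S. sh \<mu> x \<in> S}"
  have lower_end: "(\<Sum>x\<in>?B \<mu>. (cmod (v x))^2) \<le> ?N" for \<mu>
    using S by (intro sum_mono2) auto
  have upper_end: "(\<Sum>x\<in>?B \<mu>. (cmod (v (sh \<mu> x)))^2) \<le> ?N" for \<mu>
  proof -
    have "(\<Sum>x\<in>?B \<mu>. (cmod (v (sh \<mu> x)))^2) = (\<Sum>y\<in>sh \<mu> ` ?B \<mu>. (cmod (v y))^2)"
      by (subst sum.reindex) (auto intro: inj_on_subset[OF inj_sh])
    also have "\<dots> \<le> ?N" using S by (intro sum_mono2) auto
    finally show ?thesis .
  qed
  have per_direction: "(\<Sum>x\<in>?B \<mu>. (cmod (v x - v (sh \<mu> x)))^2 - t^2 * ((cmod (v x))^2 + (cmod (v (sh \<mu> x)))^2))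
      \<ge> dir_energy S \<mu> v - t^2 * (2 * ?N)" for \<mu>
  proof -
    have "t^2 * ((\<Sum>x\<in>?B \<mu>. (cmod (v x))^2) + (\<Sum>x\<in>?B \<mu>. (cmod (v (sh \<mu> x)))^2)) \<le> t^2 * (2 * ?N)"
      using lower_end[of \<mu>] upper_end[of \<mu>] by (intro mult_left_mono) auto
    then show ?thesis
      unfolding dir_energy_def by (simp add: sum_subtractf sum_distrib_left sum.distrib distrib_left)
  qed
  have "energy S v - 2 * real CARD('n) * t^2 * ?N = (\<Sum>\<mu>\<in>UNIV. dir_energy S \<mu> v - t^2 * (2 * ?N))"
    unfolding energy_def by (simp add: sum_subtractf)
  also have "\<dots> \<le> (\<Sum>\<mu>\<in>UNIV. \<Sum>x\<in>?B \<mu>.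
             (cmod (v x - v (sh \<mu> x)))^2 - t^2 * ((cmod (v x))^2 + (cmod (v (sh \<mu> x)))^2))"
    by (intro sum_mono per_direction)
  also have "\<dots> \<le> (\<Sum>\<mu>\<in>UNIV. \<Sum>x\<in>?B \<mu>.
             Re ((cnj (of_real (exp (w x)) * v x) - cnj (of_real (exp (w (sh \<mu> x))) * v (sh \<mu> x)))
                 * (of_real (exp (- w x)) * v x - of_real (exp (- w (sh \<mu> x))) * v (sh \<mu> x))))"
    by (intro sum_mono Re_conj_bond_ge w t) auto
  also have "\<dots> = Re (\<Sum>x\<in>S. cnj (of_real (exp (w x)) * v x) * graph_lap S (\<lambda>z. of_real (exp (- w z)) * v z) x)"
    unfolding sum_cnj_graph_lap[OF S] by (simp add: Re_sum)
  finally show ?thesis .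
qed

lemma sum_Re_cnj_pairs: "(\<Sum>x\<in>B. \<Sum>z\<in>B. Re (cnj (v x) * v z)) = (cmod (sum v B))^2"
proof -
  have "(\<Sum>x\<in>B. \<Sum>z\<in>B. Re (cnj (v x) * v z)) = Re (cnj (sum v B) * sum v B)"
    by (simp add: cnj_sum sum_product Re_sum)
  then show ?thesis by (simp only: Re_cnj_self)
qed

lemma norm_sum_sq_eq_variance:
  assumes "finite B"
  shows "(cmod (sum v B))^2
       = real (card B) * (\<Sum>x\<in>B. (cmod (v x))^2) - (1/2) * (\<Sum>x\<in>B. \<Sum>z\<in>B. (cmod (v x - v z))^2)"
proof -
  have "(\<Sum>x\<in>B. \<Sum>z\<in>B. (cmod (v x - v z))^2)
      = (\<Sum>x\<in>B. \<Sum>z\<in>B. (cmod (v x))^2) + (\<Sum>x\<in>B. \<Sum>z\<in>B. (cmod (v z))^2)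
        - 2 * (\<Sum>x\<in>B. \<Sum>z\<in>B. Re (cnj (v x) * v z))"
    by (simp add: norm_diff_sq sum_subtractf sum.distrib sum_distrib_left)
  moreover have "(\<Sum>x\<in>B. \<Sum>z\<in>B. (cmod (v x))^2) = real (card B) * (\<Sum>x\<in>B. (cmod (v x))^2)"
    by (simp add: sum_distrib_left)
  moreover have "(\<Sum>x\<in>B. \<Sum>z\<in>B. (cmod (v z))^2) = real (card B) * (\<Sum>x\<in>B. (cmod (v x))^2)"
    by simp
  ultimately show ?thesis using sum_Re_cnj_pairs[of v B] by linarith
qed

lemma cube_coercivity:
  fixes c :: "'n::finite \<Rightarrow> int"
  assumes "M > 0" "0 \<le> \<kappa>" "\<kappa> \<le> 1"
  shows "\<kappa> / 4 ^ CARD('n) * (\<Sum>x\<in>cube c M. (cmod (v x))^2)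
       \<le> real_of_int M ^ 2 * energy (cube c M) v + \<kappa> / real_of_int M ^ CARD('n) * (cmod (sum v (cube c M)))^2"
proof -
  define N where "N = real_of_int M ^ CARD('n)"
  define K where "K = (4::real) ^ CARD('n)"
  define n where "n = (\<Sum>x\<in>cube c M. (cmod (v x))^2)"
  define P where "P = (\<Sum>x\<in>cube c M. \<Sum>z\<in>cube c M. (cmod (v x - v z))^2)"
  define T where "T = (cmod (sum v (cube c M)))^2"
  define E where "E = real_of_int M ^ 2 * energy (cube c M) v"
  have N: "N > 0" and K: "K \<ge> 1" unfolding N_def K_def using assms(1) by auto
  have T: "T = N * n - P / 2"
    unfolding T_def N_def n_def P_def norm_sum_sq_eq_variance[OF finite_cube] using assms(1)
    by (simp add: card_cube)
  have P: "0 \<le> P" "P \<le> K * N * E"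
    unfolding P_def K_def N_def E_def
    using cube_poincare[OF assms(1), where c = c and v = v] by (simp_all add: sum_nonneg power_add power2_eq_square mult_ac)
  have "\<kappa> * N * n \<le> \<kappa> * N * n + P * (1 - \<kappa> / 2)" using P assms by simp
  also have "\<dots> = P + \<kappa> * T" unfolding T by (simp add: algebra_simps)
  also have "\<dots> \<le> K * N * E + K * (\<kappa> * T)"
    using P K assms(2) T_def mult_right_mono[OF K, of "\<kappa> * T"] by simp
  also have "\<dots> = K * N * (E + \<kappa> / N * T)"
    using N by (simp add: field_simps)
  finally have "\<kappa> * N * n \<le> K * N * (E + \<kappa> / N * T)" .
  then have "K * N * (\<kappa> / K * n) \<le> K * N * (E + \<kappa> / N * T)"
    using K by (simp add: field_simps)
  moreover have "0 < K * N" using N K by simp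
  ultimately have "\<kappa> / K * n \<le> E + \<kappa> / N * T" by (simp only: mult_le_cancel_left_pos)
  then show ?thesis unfolding N_def K_def n_def T_def E_def .
qed

lemma Re_conj_pair_ge:
  fixes p q :: complex and s1 s2 \<beta> :: real
  assumes "\<bar>s1 - s2\<bar> \<le> \<beta>" "\<beta> \<le> 1"
  shows "Re (cnj (of_real (exp s1) * p) * (of_real (exp (- s2)) * q)) \<ge> Re (cnj p * q) - 2 * \<beta> * (cmod p * cmod q)"
proof -
  have e: "cnj (of_real (exp s1) * p) * (of_real (exp (- s2)) * q) = of_real (exp (s1 - s2)) * (cnj p * q)"
    by (simp add: exp_diff exp_minus field_simps)
  have "\<bar>exp (s1 - s2) - 1\<bar> \<le> 2 * \<bar>s1 - s2\<bar>" by (rule abs_exp_minus_one_le) (use assms in linarith)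
  also have "\<dots> \<le> 2 * \<beta>" using assms by simp
  finally have "\<bar>exp (s1 - s2) - 1\<bar> * \<bar>Re (cnj p * q)\<bar> \<le> 2 * \<beta> * (cmod p * cmod q)"
    using abs_Re_le_cmod[of "cnj p * q"] assms by (intro mult_mono) (auto simp: norm_mult)
  moreover have "(exp (s1 - s2) - 1) * Re (cnj p * q) \<ge> - (\<bar>exp (s1 - s2) - 1\<bar> * \<bar>Re (cnj p * q)\<bar>)"
    by (metis abs_ge_minus_self abs_mult minus_le_iff)
  ultimately show ?thesis unfolding e by (simp add: algebra_simps)
qed

lemma Re_conj_average_ge:
  fixes v :: "('n::finite \<Rightarrow> int) \<Rightarrow> complex" and w :: "('n \<Rightarrow> int) \<Rightarrow> real"
  assumes L: "L > 0" "k \<le> m"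
    and w: "\<And>c x z. c \<in> Omega_j L m k \<Longrightarrow> x \<in> Block L k c \<Longrightarrow> z \<in> Block L k c \<Longrightarrow> \<bar>w x - w z\<bar> \<le> \<beta>"
    and \<beta>: "0 \<le> \<beta>" "\<beta> \<le> 1"
  shows "Re (\<Sum>x\<in>Omega L m. cnj (of_real (exp (w x)) * v x)
              * (\<Sum>z\<in>Block L k (corner (int L ^ k) x). of_real (exp (- w z)) * v z))
      \<ge> (\<Sum>c\<in>Omega_j L m k. (cmod (sum v (Block L k c)))^2)
         - 2 * \<beta> * real L ^ (k * CARD('n)) * (\<Sum>x\<in>Omega L m. (cmod (v x))^2)"
proof -
  let ?B = "Block L k"
  have block_bound: "(\<Sum>x\<in>?B c. \<Sum>z\<in>?B c. cmod (v x) * cmod (v z))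
      \<le> real L ^ (k * CARD('n)) * (\<Sum>x\<in>?B c. (cmod (v x))^2)" for c
    using sum_squared_le_sum_of_squares[of "\<lambda>x. cmod (v x)" "?B c"] card_Block[OF L(1), of k c]
    by (simp add: sum_product power2_eq_square mult.commute)
  have "(\<Sum>c\<in>Omega_j L m k. (cmod (sum v (?B c)))^2)
          - 2 * \<beta> * real L ^ (k * CARD('n)) * (\<Sum>x\<in>Omega L m. (cmod (v x))^2)
      = (\<Sum>c\<in>Omega_j L m k. \<Sum>x\<in>?B c. \<Sum>z\<in>?B c. Re (cnj (v x) * v z))
          - 2 * \<beta> * (\<Sum>c\<in>Omega_j L m k. real L ^ (k * CARD('n)) * (\<Sum>x\<in>?B c. (cmod (v x))^2))"
    by (simp only: sum_Re_cnj_pairs sum_Omega_by_Blocks[OF L] sum_distrib_left mult.assoc)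
  also have "\<dots> \<le> (\<Sum>c\<in>Omega_j L m k. \<Sum>x\<in>?B c. \<Sum>z\<in>?B c. Re (cnj (v x) * v z))
          - 2 * \<beta> * (\<Sum>c\<in>Omega_j L m k. \<Sum>x\<in>?B c. \<Sum>z\<in>?B c. cmod (v x) * cmod (v z))"
    using \<beta> by (intro diff_left_mono mult_left_mono sum_mono block_bound) auto
  also have "\<dots> = (\<Sum>c\<in>Omega_j L m k. \<Sum>x\<in>?B c. \<Sum>z\<in>?B c.
                     Re (cnj (v x) * v z) - 2 * \<beta> * (cmod (v x) * cmod (v z)))"
    by (simp only: sum_subtractf sum_distrib_left)
  also have "\<dots> \<le> (\<Sum>c\<in>Omega_j L m k. \<Sum>x\<in>?B c. \<Sum>z\<in>?B c.
                     Re (cnj (of_real (exp (w x)) * v x) * (of_real (exp (- w z)) * v z)))"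
    by (intro sum_mono Re_conj_pair_ge w \<beta>) auto
  also have "\<dots> = Re (\<Sum>x\<in>Omega L m. cnj (of_real (exp (w x)) * v x)
              * (\<Sum>z\<in>Block L k (corner (int L ^ k) x). of_real (exp (- w z)) * v z))"
    by (simp add: sum_Omega_by_Blocks[OF L] corner_eq_if_mem_Block[OF L] sum_distrib_left Re_sum)
  finally show ?thesis .
qed

lemma sum_energy_Blocks_le:
  assumes L: "L > 0" "k \<le> m"
  shows "(\<Sum>c\<in>Omega_j L m k. energy (Block L k c) v) \<le> energy (Omega L m) (v::('n::finite \<Rightarrow> int) \<Rightarrow> complex)"
proof -
  have "(\<Sum>c\<in>Omega_j L m k. dir_energy (Block L k c) i v) \<le> dir_energy (Omega L m) i v" for i
  proof -
    have "(\<Sum>c\<in>Omega_j L m k. dir_energy (Block L k c) i v)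
        = (\<Sum>c\<in>Omega_j L m k. \<Sum>x\<in>Block L k c.
             if sh i x \<in> Block L k c then (cmod (v x - v (sh i x)))^2 else 0)"
      by (intro sum.cong refl dir_energy_eq_sum_if) (simp add: Block_eq_cube)
    also have "\<dots> \<le> (\<Sum>c\<in>Omega_j L m k. \<Sum>x\<in>Block L k c.
             if sh i x \<in> Omega L m then (cmod (v x - v (sh i x)))^2 else 0)"
      using Block_subset_Omega[OF L] by (intro sum_mono) auto
    also have "\<dots> = dir_energy (Omega L m) i v"
      by (simp add: dir_energy_eq_sum_if sum_Omega_by_Blocks[OF L])
    finally show ?thesis .
  qed
  then show ?thesis unfolding energy_def by (subst sum.swap) (intro sum_mono)
qed

lemma Omega_coercivity:
  fixes v :: "('n::finite \<Rightarrow> int) \<Rightarrow> complex"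
  assumes L: "L > 0" "k \<le> m" and \<kappa>: "0 \<le> \<kappa>" "\<kappa> \<le> 1"
  shows "\<kappa> / 4 ^ CARD('n) * (\<Sum>x\<in>Omega L m. (cmod (v x))^2)
       \<le> (real L ^ k)^2 * energy (Omega L m) v
         + \<kappa> / real L ^ (k * CARD('n)) * (\<Sum>c\<in>Omega_j L m k. (cmod (sum v (Block L k c)))^2)"
    (is "?lhs \<le> ?rhs")
proof -
  have "?lhs = (\<Sum>c\<in>Omega_j L m k. \<kappa> / 4 ^ CARD('n) * (\<Sum>x\<in>Block L k c. (cmod (v x))^2))"
    by (simp add: sum_Omega_by_Blocks[OF L] sum_distrib_left)
  also have "\<dots> \<le> (\<Sum>c\<in>Omega_j L m k. (real L ^ k)^2 * energy (Block L k c) v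
         + \<kappa> / real L ^ (k * CARD('n)) * (cmod (sum v (Block L k c)))^2)"
    using cube_coercivity[where M = "int L ^ k" and \<kappa> = \<kappa> and v = v] L \<kappa>
    by (intro sum_mono) (simp add: Block_eq_cube power_mult mult.commute)
  also have "\<dots> = (real L ^ k)^2 * (\<Sum>c\<in>Omega_j L m k. energy (Block L k c) v)
         + \<kappa> / real L ^ (k * CARD('n)) * (\<Sum>c\<in>Omega_j L m k. (cmod (sum v (Block L k c)))^2)"
    by (simp add: sum.distrib sum_distrib_left)
  also have "\<dots> \<le> ?rhs"
    using mult_left_mono[OF sum_energy_Blocks_le[OF L, of v], of "(real L ^ k)^2"] by simp
  finally show ?thesis .
qed

lemma a_j_bounds:
  assumes "L > 1" "k \<ge> 1" "0 < a"
  shows "3 * a / 4 \<le> a_j a L k" "a_j a L k \<le> a"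
proof -
  define x where "x = 1 / real L ^ 2"
  define y where "y = 1 / real L ^ (2 * k)"
  have L2: "real L \<ge> 2" using assms by simp
  have px: "real L powr (-2) = x" unfolding x_def using assms
    by (simp add: powr_minus powr_realpow divide_inverse)
  have e1: "- 2 * real k = - (real (2 * k))" by simp
  have e2: "real L powr real (2*k) = real L ^ (2*k)" using assms by (intro powr_realpow) simp
  have py: "real L powr (- 2 * real k) = y" unfolding e1 powr_minus e2 y_def by (simp add: divide_inverse)
  have x4: "x \<le> 1/4"
  proof -
    have "4 \<le> real L ^ 2" using L2 power_mono[OF L2, of 2] by simp
    then show ?thesis unfolding x_def by (simp add: divide_le_eq)
  qed
  have y0: "0 < y" unfolding y_def using assms by simp
  have yx: "y \<le> x"
  proof -
    have "real L ^ 2 \<le> real L ^ (2 * k)" using assms by (intro power_increasing) auto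
    then show ?thesis unfolding x_def y_def using assms by (intro divide_left_mono) auto
  qed
  have aj: "a_j a L k = a * ((1 - x) / (1 - y))" unfolding a_j_def px py by simp
  have d: "0 < 1 - y" using yx x4 by linarith
  have r1: "(1 - x) / (1 - y) \<le> 1" using d yx by simp
  have r2: "3/4 \<le> (1 - x) / (1 - y)"
  proof -
    have "3/4 * (1 - y) \<le> 1 - x" unfolding right_diff_distrib using x4 y0 by linarith
    then show ?thesis using d by (simp add: le_divide_eq)
  qed
  show "3 * a / 4 \<le> a_j a L k" unfolding aj using mult_left_mono[OF r2, of a] assms by simp
  show "a_j a L k \<le> a" unfolding aj using mult_left_mono[OF r1, of a] assms by simp
qed

lemma Re_of_real_mult: "Re (of_real r * z) = r * Re z"
  by simp

lemma Re_sum_cnj_Hop: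
  fixes u g :: "('n::finite \<Rightarrow> int) \<Rightarrow> complex"
  assumes L: "L > 0" "k \<le> m"
  shows "Re (\<Sum>x\<in>Omega L m. cnj (u x) * Hop a mu0 L k m g x)
       = (real L ^ k)^2 * Re (\<Sum>x\<in>Omega L m. cnj (u x) * graph_lap (Omega L m) g x)
         + mubar_j mu0 L k * Re (\<Sum>x\<in>Omega L m. cnj (u x) * g x)
         + a_j a L k / real L ^ (k * CARD('n))
           * Re (\<Sum>x\<in>Omega L m. cnj (u x) * (\<Sum>z\<in>Block L k (corner (int L ^ k) x). g z))"
proof -
  have "(\<Sum>x\<in>Omega L m. cnj (u x) * Hop a mu0 L k m g x)
      = of_real ((real L ^ k)^2) * (\<Sum>x\<in>Omega L m. cnj (u x) * graph_lap (Omega L m) g x)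
        + of_real (mubar_j mu0 L k) * (\<Sum>x\<in>Omega L m. cnj (u x) * g x)
        + of_real (a_j a L k / real L ^ (k * CARD('n)))
          * (\<Sum>x\<in>Omega L m. cnj (u x) * (\<Sum>z\<in>Block L k (corner (int L ^ k) x). g z))"
    by (simp add: Hop_eq[OF L] sum.distrib sum_distrib_left algebra_simps power_mult)
  then show ?thesis by (simp only: plus_complex.sel Re_of_real_mult)
qed

lemma Re_conj_Hop_ge:
  fixes v :: "('n::finite \<Rightarrow> int) \<Rightarrow> complex" and w :: "('n \<Rightarrow> int) \<Rightarrow> real"
  assumes L: "L > 0" "k \<le> m" and ak: "0 \<le> a_j a L k"
    and w_bond: "\<And>x \<mu>. x \<in> Omega L m \<Longrightarrow> sh \<mu> x \<in> Omega L m \<Longrightarrow> \<bar>w x - w (sh \<mu> x)\<bar> \<le> \<alpha> / real L ^ k"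
    and \<alpha>: "\<alpha> \<le> 1"
    and w_Block: "\<And>c x z. c \<in> Omega_j L m k \<Longrightarrow> x \<in> Block L k c \<Longrightarrow> z \<in> Block L k c \<Longrightarrow> \<bar>w x - w z\<bar> \<le> \<beta>"
    and \<beta>: "0 \<le> \<beta>" "\<beta> \<le> 1"
  defines "N \<equiv> \<Sum>x\<in>Omega L m. (cmod (v x))^2"
  shows "(real L ^ k)^2 * energy (Omega L m) v - 2 * real CARD('n) * \<alpha>^2 * N + mubar_j mu0 L k * N
         + a_j a L k / real L ^ (k * CARD('n)) * (\<Sum>c\<in>Omega_j L m k. (cmod (sum v (Block L k c)))^2)
         - 2 * \<beta> * a_j a L k * N
       \<le> Re (\<Sum>x\<in>Omega L m. cnj (of_real (exp (w x)) * v x) * Hop a mu0 L k m (\<lambda>z. of_real (exp (- w z)) * v z) x)"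
proof -
  define S where "S = (Omega L m :: ('n \<Rightarrow> int) set)"
  define u where "u = (\<lambda>x. complex_of_real (exp (w x)) * v x)"
  define g where "g = (\<lambda>z. complex_of_real (exp (- w z)) * v z)"
  define Mr where "Mr = real L ^ k"
  define Nk where "Nk = real L ^ (k * CARD('n))"
  have Mr: "Mr \<ge> 1" and Nk: "Nk > 0" unfolding Mr_def Nk_def using L by auto
  have mass: "Re (\<Sum>x\<in>S. cnj (u x) * g x) = N"
  proof -
    have "(\<Sum>x\<in>S. cnj (u x) * g x) = (\<Sum>x\<in>S. cnj (v x) * v x)"
      unfolding u_def g_def by (intro sum.cong refl) (simp add: exp_minus field_simps)
    then show ?thesis unfolding N_def S_def by (simp only: Re_sum Re_cnj_self)
  qed
  have lap: "Mr^2 * energy S v - 2 * real CARD('n) * \<alpha>^2 * N \<le> Mr^2 * Re (\<Sum>x\<in>S. cnj (u x) * graph_lap S g x)"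
  proof -
    have "energy S v - 2 * real CARD('n) * (\<alpha> / Mr)^2 * N \<le> Re (\<Sum>x\<in>S. cnj (u x) * graph_lap S g x)"
      unfolding u_def g_def N_def S_def
      by (rule Re_conj_graph_lap_ge) (use w_bond \<alpha> Mr in \<open>auto simp: Mr_def divide_le_eq\<close>)
    moreover have "Mr^2 * (energy S v - 2 * real CARD('n) * (\<alpha> / Mr)^2 * N)
        = Mr^2 * energy S v - 2 * real CARD('n) * \<alpha>^2 * N"
      using Mr by (simp add: field_simps power2_eq_square)
    ultimately show ?thesis using mult_left_mono[of _ _ "Mr^2"] by fastforce
  qed
  have av: "a_j a L k / Nk * (\<Sum>c\<in>Omega_j L m k. (cmod (sum v (Block L k c)))^2) - 2 * \<beta> * a_j a L k * N
      \<le> a_j a L k / Nk * Re (\<Sum>x\<in>S. cnj (u x) * (\<Sum>z\<in>Block L k (corner (int L ^ k) x). g z))"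
  proof -
    have "(\<Sum>c\<in>Omega_j L m k. (cmod (sum v (Block L k c)))^2) - 2 * \<beta> * Nk * N
        \<le> Re (\<Sum>x\<in>S. cnj (u x) * (\<Sum>z\<in>Block L k (corner (int L ^ k) x). g z))"
      unfolding u_def g_def S_def N_def Nk_def by (rule Re_conj_average_ge[OF L w_Block \<beta>])
    from mult_left_mono[OF this, of "a_j a L k / Nk"] show ?thesis
      using ak Nk by (simp add: field_simps)
  qed
  have "Re (\<Sum>x\<in>S. cnj (u x) * Hop a mu0 L k m g x)
      = Mr^2 * Re (\<Sum>x\<in>S. cnj (u x) * graph_lap S g x) + mubar_j mu0 L k * N
        + a_j a L k / Nk * Re (\<Sum>x\<in>S. cnj (u x) * (\<Sum>z\<in>Block L k (corner (int L ^ k) x). g z))"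
    unfolding mass[symmetric] S_def Mr_def Nk_def by (rule Re_sum_cnj_Hop[OF L])
  then show ?thesis
    using lap av unfolding S_def u_def g_def Mr_def Nk_def by linarith
qed

theorem Hop_conj_coercive:
  fixes v :: "('n::finite \<Rightarrow> int) \<Rightarrow> complex" and w :: "('n \<Rightarrow> int) \<Rightarrow> real"
  assumes L: "L > 1" "1 \<le> k" "k \<le> m" and mu: "mu0 \<ge> 0" and a: "0 < a" "a \<le> 1"
    and w_bond: "\<And>x \<mu>. x \<in> Omega L m \<Longrightarrow> sh \<mu> x \<in> Omega L m \<Longrightarrow> \<bar>w x - w (sh \<mu> x)\<bar> \<le> \<alpha> / real L ^ k"
    and \<alpha>: "\<alpha> \<le> 1"
    and w_Block: "\<And>c x z. c \<in> Omega_j L m k \<Longrightarrow> x \<in> Block L k c \<Longrightarrow> z \<in> Block L k c \<Longrightarrow> \<bar>w x - w z\<bar> \<le> \<beta>"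
    and \<beta>: "0 \<le> \<beta>" "\<beta> \<le> 1"
    and small: "2 * real CARD('n) * \<alpha>^2 + 2 * \<beta> \<le> a / (4 * 4 ^ CARD('n))"
  shows "a / (2 * 4 ^ CARD('n)) * (\<Sum>x\<in>Omega L m. (cmod (v x))^2)
       \<le> Re (\<Sum>x\<in>Omega L m. cnj (of_real (exp (w x)) * v x) * Hop a mu0 L k m (\<lambda>z. of_real (exp (- w z)) * v z) x)"
proof -
  define ak where "ak = a_j a L k"
  define K where "K = (4::real) ^ CARD('n)"
  define N where "N = (\<Sum>x\<in>Omega L m. (cmod (v x))^2)"
  define T where "T = (\<Sum>c\<in>Omega_j L m k. (cmod (sum v (Block L k c)))^2)"
  have L0: "L > 0" using L by simp
  have K: "K \<ge> 1" and N: "N \<ge> 0" unfolding K_def N_def by (auto intro: sum_nonneg)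
  have ak: "3 * a / 4 \<le> ak" "ak \<le> a" unfolding ak_def using a_j_bounds[OF L(1,2) a(1)] by auto
  have lower: "(real L ^ k)^2 * energy (Omega L m) v - 2 * real CARD('n) * \<alpha>^2 * N + mubar_j mu0 L k * N
         + ak / real L ^ (k * CARD('n)) * T - 2 * \<beta> * ak * N
       \<le> Re (\<Sum>x\<in>Omega L m. cnj (of_real (exp (w x)) * v x) * Hop a mu0 L k m (\<lambda>z. of_real (exp (- w z)) * v z) x)"
    unfolding ak_def N_def T_def
    by (rule Re_conj_Hop_ge[OF L0 L(3) _ w_bond \<alpha> w_Block \<beta>]) (use ak a in \<open>simp add: ak_def\<close>)
  have coercive: "ak / K * N \<le> (real L ^ k)^2 * energy (Omega L m) v + ak / real L ^ (k * CARD('n)) * T"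
    unfolding K_def N_def T_def by (rule Omega_coercivity[OF L0 L(3)]) (use ak a in auto)
  have "0 \<le> mubar_j mu0 L k * N" unfolding mubar_j_def using mu N by simp
  moreover have "2 * real CARD('n) * \<alpha>^2 * N + 2 * \<beta> * ak * N \<le> a / (4 * K) * N"
  proof -
    have "(2 * real CARD('n) * \<alpha>^2 + 2 * \<beta>) * N \<le> a / (4 * K) * N"
      using mult_right_mono[OF small N] unfolding K_def .
    moreover have "2 * \<beta> * ak * N \<le> 2 * \<beta> * 1 * N"
      using ak a \<beta> N by (intro mult_right_mono mult_left_mono) auto
    ultimately show ?thesis by (simp add: distrib_right)
  qed
  moreover have "3 * a / 4 / K * N \<le> ak / K * N"
    using ak K N by (intro mult_right_mono divide_right_mono) auto
  moreover have "a / (2 * K) * N = 3 * a / 4 / K * N - a / (4 * K) * N"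
    using K by (simp add: field_simps)
  ultimately show ?thesis using lower coercive unfolding K_def N_def by linarith
qed

section \<open>Invertibility of \<open>Hop\<close>\<close>

definition fun_scale :: "complex \<Rightarrow> ('a \<Rightarrow> complex) \<Rightarrow> 'a \<Rightarrow> complex" where
  "fun_scale c f = (\<lambda>x. c * f x)"

global_interpretation fun_vs: vector_space "fun_scale :: complex \<Rightarrow> ('a \<Rightarrow> complex) \<Rightarrow> 'a \<Rightarrow> complex"
  by unfold_locales (simp_all add: fun_scale_def fun_eq_iff distrib_left distrib_right)

definition delta :: "'a \<Rightarrow> 'a \<Rightarrow> complex" where
  "delta y = (\<lambda>x. if x = y then 1 else 0)"

lemma inj_delta: "inj delta"
proof (rule injI)
  fix a b :: 'a assume "delta a = delta b"
  then have "delta a a = delta b a" by simp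
  then show "a = b" by (simp add: delta_def split: if_splits)
qed

lemma sum_fun_apply: "finite A \<Longrightarrow> (sum F A) x = (\<Sum>i\<in>A. F i x)"
  for F :: "'i \<Rightarrow> 'a \<Rightarrow> 'b::comm_monoid_add"
  by (induction A rule: finite_induct) simp_all

lemma L2_subset_span_delta:
  assumes "finite S"
  shows "L2 S \<subseteq> fun_vs.span (delta ` S)"
proof
  fix f assume f: "f \<in> L2 S"
  have "f = (\<Sum>y\<in>S. fun_scale (f y) (delta y))"
  proof
    fix x
    have "(\<Sum>y\<in>S. fun_scale (f y) (delta y)) x = (\<Sum>y\<in>S. f y * delta y x)"
      by (simp add: sum_fun_apply[OF assms] fun_scale_def)
    also have "\<dots> = (if x \<in> S then f x else 0)"
      using assms by (simp add: delta_def if_distrib cong: if_cong)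
    finally show "f x = (\<Sum>y\<in>S. fun_scale (f y) (delta y)) x" using f by (auto simp: L2_def)
  qed
  also have "\<dots> \<in> fun_vs.span (delta ` S)"
    by (intro fun_vs.span_sum fun_vs.span_scale fun_vs.span_base) auto
  finally show "f \<in> fun_vs.span (delta ` S)" .
qed

lemma span_delta_subset_L2: "fun_vs.span (delta ` S) \<subseteq> L2 S"
proof (rule fun_vs.span_minimal)
  show "delta ` S \<subseteq> L2 S" unfolding L2_def delta_def by auto
  show "fun_vs.subspace (L2 S)"
    by (rule fun_vs.subspaceI) (auto simp: L2_def fun_scale_def)
qed

lemma independent_delta: "fun_vs.independent (delta ` S)"
  unfolding fun_vs.independent_explicit_module
proof (intro allI impI)
  fix t u v assume t: "finite t" "t \<subseteq> delta ` S" and sum0: "(\<Sum>v\<in>t. fun_scale (u v) v) = 0"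
    and v: "v \<in> t"
  then obtain y where y: "v = delta y" by auto
  have "0 = (\<Sum>v\<in>t. fun_scale (u v) v) y" using sum0 by simp
  also have "\<dots> = (\<Sum>v'\<in>t. u v' * v' y)" using t(1) by (simp add: sum_fun_apply fun_scale_def)
  also have "\<dots> = (\<Sum>v'\<in>t. if v' = v then u v else 0)"
  proof (rule sum.cong[OF refl])
    fix v' assume "v' \<in> t"
    then obtain y' where y': "v' = delta y'" using t by auto
    have "(v' = v) = (y' = y)" unfolding y' y by (auto dest: injD[OF inj_delta])
    moreover have "v' y = (if y' = y then 1 else 0)" unfolding y' delta_def by auto
    ultimately show "u v' * v' y = (if v' = v then u v else 0)" by auto
  qed
  also have "\<dots> = u v" using t v by simp
  finally show "u v = 0" by simp
qed

lemma linear_inj_on_L2_surj: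
  fixes T :: "(('n::finite \<Rightarrow> int) \<Rightarrow> complex) \<Rightarrow> (('n \<Rightarrow> int) \<Rightarrow> complex)"
  assumes S: "finite S" and lin: "Vector_Spaces.linear fun_scale fun_scale T"
    and maps: "T ` L2 S \<subseteq> L2 S" and inj: "inj_on T (L2 S)" and h: "h \<in> L2 S"
  shows "\<exists>f\<in>L2 S. T f = h"
proof -
  interpret T: Vector_Spaces.linear fun_scale fun_scale T by (rule lin)
  let ?B = "delta ` S"
  have span: "fun_vs.span ?B = L2 S"
    using L2_subset_span_delta[OF S] span_delta_subset_L2 by (rule subset_antisym[rotated])
  have TB: "T ` ?B \<subseteq> L2 S"
    using image_mono[OF fun_vs.span_superset[of ?B]] maps unfolding span by (rule order_trans)
  have inj_span: "inj_on T (fun_vs.span ?B)" unfolding span by (rule inj)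
  have indep: "fun_vs.independent (T ` ?B)"
    by (rule T.independent_injective_image[OF independent_delta inj_span])
  have card: "card (T ` ?B) = card ?B"
    by (rule card_image[OF inj_on_subset[OF inj_span fun_vs.span_superset]])
  have "L2 S \<subseteq> fun_vs.span (T ` ?B)"
  proof
    fix h' assume h': "h' \<in> L2 S"
    show "h' \<in> fun_vs.span (T ` ?B)"
    proof (rule ccontr)
      assume h'_new: "h' \<notin> fun_vs.span (T ` ?B)"
      have "insert h' (T ` ?B) \<subseteq> fun_vs.span ?B" unfolding span using h' TB by simp
      then have "card (insert h' (T ` ?B)) \<le> card ?B"
        using fun_vs.independent_span_bound[OF _ fun_vs.independent_insertI[OF h'_new indep]] S by simp
      moreover have "h' \<notin> T ` ?B" using h'_new fun_vs.span_superset[of "T ` ?B"] by auto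
      ultimately show False using S card by simp
    qed
  qed
  then have "h \<in> T ` L2 S" using h unfolding T.span_image span by (rule subsetD)
  then show ?thesis by (simp add: image_iff eq_commute)
qed

lemma Hop_linear:
  assumes "L > 0" "k \<le> m"
  shows "Vector_Spaces.linear fun_scale fun_scale (Hop a mu0 L k m :: (('n::finite \<Rightarrow> int) \<Rightarrow> complex) \<Rightarrow> _)"
proof -
  have "Hop a mu0 L k m (f + g) = Hop a mu0 L k m f + Hop a mu0 L k m g" for f g :: "('n \<Rightarrow> int) \<Rightarrow> complex"
  proof
    fix x
    show "Hop a mu0 L k m (f + g) x = (Hop a mu0 L k m f + Hop a mu0 L k m g) x"
    proof (cases "x \<in> Omega L m")
      case True
      have "f + g = (\<lambda>y. f y + g y)" by auto
      then show ?thesis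
        using True by (simp add: Hop_eq[OF assms] graph_lap_add sum.distrib algebra_simps)
    qed (simp add: Hop_def)
  qed
  moreover have "Hop a mu0 L k m (fun_scale c f) = fun_scale c (Hop a mu0 L k m f)" for c f
  proof
    fix x
    show "Hop a mu0 L k m (fun_scale c f) x = fun_scale c (Hop a mu0 L k m f) x"
    proof (cases "x \<in> Omega L m")
      case True
      then show ?thesis unfolding fun_scale_def
        by (simp add: Hop_eq[OF assms] graph_lap_scale sum_distrib_left[symmetric] algebra_simps)
    qed (simp add: Hop_def fun_scale_def)
  qed
  ultimately show ?thesis
    unfolding Vector_Spaces.linear_iff using fun_vs.vector_space_axioms by auto
qed

lemma Hop_kernel_trivial:
  assumes L: "L > 1" "1 \<le> k" "k \<le> m" and mu: "mu0 \<ge> 0" and a: "0 < a" "a \<le> 1"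
    and f: "f \<in> L2 (Omega L m)" and Hf: "Hop a mu0 L k m f = 0"
  shows "f = (0::('n::finite \<Rightarrow> int) \<Rightarrow> complex)"
proof -
  have "a / (2 * 4 ^ CARD('n)) * (\<Sum>x\<in>Omega L m. (cmod (f x))^2)
      \<le> Re (\<Sum>x\<in>Omega L m. cnj (of_real (exp 0) * f x) * Hop a mu0 L k m (\<lambda>z. of_real (exp (- 0)) * f z) x)"
    by (rule Hop_conj_coercive[OF L mu a, where \<alpha> = 0 and \<beta> = 0]) (use a in auto)
  then have "a / (2 * 4 ^ CARD('n)) * (\<Sum>x\<in>Omega L m. (cmod (f x))^2) \<le> 0"
    using Hf by simp
  moreover have "0 < a / (2 * 4 ^ CARD('n))" using a by simp
  ultimately have "(\<Sum>x\<in>Omega L m. (cmod (f x))^2) \<le> 0"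
    by (metis mult_le_0_iff not_less)
  then have "(\<Sum>x\<in>Omega L m. (cmod (f x))^2) = 0"
    by (simp add: antisym sum_nonneg)
  then have "\<forall>x\<in>Omega L m. f x = 0" by (simp add: sum_nonneg_eq_0_iff)
  then show ?thesis using f by (auto simp: L2_def fun_eq_iff)
qed

lemma Gk_inverse:
  assumes L: "L > 1" "1 \<le> k" "k \<le> m" and mu: "mu0 \<ge> 0" and a: "0 < a" "a \<le> 1"
    and f: "f \<in> L2 (Omega L m)"
  shows "Gk a mu0 L k m f \<in> L2 (Omega L m)"
    and "Hop a mu0 L k m (Gk a mu0 L k m f) = (f::('n::finite \<Rightarrow> int) \<Rightarrow> complex)"
proof -
  have L0: "L > 0" using L by simp
  interpret H: Vector_Spaces.linear fun_scale fun_scale "Hop a mu0 L k m :: (('n \<Rightarrow> int) \<Rightarrow> complex) \<Rightarrow> _"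
    by (rule Hop_linear[OF L0 L(3)])
  have inj: "inj_on (Hop a mu0 L k m) (L2 (Omega L m) :: (('n \<Rightarrow> int) \<Rightarrow> complex) set)"
  proof (rule inj_onI)
    fix g1 g2 :: "('n \<Rightarrow> int) \<Rightarrow> complex"
    assume "g1 \<in> L2 (Omega L m)" "g2 \<in> L2 (Omega L m)" "Hop a mu0 L k m g1 = Hop a mu0 L k m g2"
    then have "g1 - g2 \<in> L2 (Omega L m)" "Hop a mu0 L k m (g1 - g2) = 0"
      by (auto simp: L2_def H.diff)
    then have "g1 - g2 = 0" by (rule Hop_kernel_trivial[OF L mu a])
    then show "g1 = g2" by simp
  qed
  have "\<exists>g\<in>L2 (Omega L m). Hop a mu0 L k m g = f"
    using Hop_in_L2 by (intro linear_inj_on_L2_surj[OF finite_Omega Hop_linear[OF L0 L(3)] _ inj f]) blast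
  then have "\<exists>!g. g \<in> L2 (Omega L m) \<and> Hop a mu0 L k m g = f"
    using inj by (auto dest: inj_onD)
  then have "Gk a mu0 L k m f \<in> L2 (Omega L m) \<and> Hop a mu0 L k m (Gk a mu0 L k m f) = f"
    unfolding Gk_def by (rule theI')
  then show "Gk a mu0 L k m f \<in> L2 (Omega L m)" "Hop a mu0 L k m (Gk a mu0 L k m f) = f" by auto
qed

section \<open>The Combes--Thomas estimate\<close>

definition l1_weight :: "real \<Rightarrow> ('n::finite \<Rightarrow> int) \<Rightarrow> ('n \<Rightarrow> int) \<Rightarrow> real" where
  "l1_weight r y' x = (\<Sum>\<mu>\<in>UNIV. \<bar>real_of_int (x \<mu> - y' \<mu>)\<bar>) / r"

lemma abs_l1_weight_diff_le:
  assumes "r > 0"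
  shows "\<bar>l1_weight r y' x - l1_weight r y' z\<bar> \<le> (\<Sum>\<mu>\<in>UNIV. \<bar>real_of_int (x \<mu> - z \<mu>)\<bar>) / r"
proof -
  have "\<bar>(\<Sum>\<mu>\<in>UNIV. \<bar>real_of_int (x \<mu> - y' \<mu>)\<bar>) - (\<Sum>\<mu>\<in>UNIV. \<bar>real_of_int (z \<mu> - y' \<mu>)\<bar>)\<bar>
      \<le> (\<Sum>\<mu>\<in>UNIV. \<bar>\<bar>real_of_int (x \<mu> - y' \<mu>)\<bar> - \<bar>real_of_int (z \<mu> - y' \<mu>)\<bar>\<bar>)"
    unfolding sum_subtractf[symmetric] by (rule sum_abs)
  also have "\<dots> \<le> (\<Sum>\<mu>\<in>UNIV. \<bar>real_of_int (x \<mu> - z \<mu>)\<bar>)"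
    by (intro sum_mono) linarith
  finally show ?thesis
    using assms unfolding l1_weight_def by (simp add: diff_divide_distrib[symmetric] abs_div divide_right_mono)
qed

lemma abs_l1_weight_sh_le: "r > 0 \<Longrightarrow> \<bar>l1_weight r y' x - l1_weight r y' (sh \<mu> x)\<bar> \<le> 1 / r"
  using abs_l1_weight_diff_le[of r y' x "sh \<mu> x"]
  by (simp add: sh_def if_distrib of_int_diff cong: if_cong)

lemma abs_l1_weight_cube_le:
  assumes "M > 0" "x \<in> cube c M" "z \<in> cube c M"
  shows "\<bar>l1_weight (real_of_int M) y' x - l1_weight (real_of_int M) y' (z::'n::finite \<Rightarrow> int)\<bar> \<le> real CARD('n)"
proof -
  have "\<bar>real_of_int (x \<nu> - z \<nu>)\<bar> \<le> real_of_int M" for \<nu>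
    using assms unfolding cube_def by (fastforce dest!: spec[of _ \<nu>])
  then have "(\<Sum>\<nu>\<in>UNIV. \<bar>real_of_int (x \<nu> - z \<nu>)\<bar>) / real_of_int M \<le> (\<Sum>\<nu>\<in>(UNIV::'n set). real_of_int M) / real_of_int M"
    using assms(1) by (intro divide_right_mono sum_mono) auto
  then show ?thesis using abs_l1_weight_diff_le[of "real_of_int M" y' x z] assms(1) by simp
qed

lemma l1_weight_self [simp]: "l1_weight r y' y' = 0"
  unfolding l1_weight_def by simp

lemma latdist_le_l1_weight:
  assumes "r > 0"
  shows "latdist (1 / r) y y' \<le> l1_weight r y' y"
proof -
  have "latdist (1 / r) y y' = L2_set (\<lambda>\<mu>. 1 / r * real_of_int (y \<mu> - y' \<mu>)) UNIV"
    unfolding latdist_def L2_set_def ..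
  also have "\<dots> \<le> (\<Sum>\<mu>\<in>UNIV. \<bar>1 / r * real_of_int (y \<mu> - y' \<mu>)\<bar>)" by (rule L2_set_le_sum_abs)
  also have "\<dots> = l1_weight r y' y" unfolding l1_weight_def using assms
    by (simp add: abs_mult sum_distrib_left[symmetric] divide_inverse mult.commute)
  finally show ?thesis .
qed

lemma norm_sum_cnj_weighted_le:
  assumes "\<And>x. x \<in> S \<Longrightarrow> p x \<noteq> 0 \<Longrightarrow> q x \<noteq> 0 \<Longrightarrow> u x \<le> U"
  shows "cmod (\<Sum>x\<in>S. cnj (p x) * (of_real (exp (u x)) * q x))
       \<le> exp U * (L2_set (\<lambda>x. cmod (p x)) S * L2_set (\<lambda>x. cmod (q x)) S)"
proof -
  have "cmod (\<Sum>x\<in>S. cnj (p x) * (of_real (exp (u x)) * q x))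
      \<le> (\<Sum>x\<in>S. cmod (cnj (p x) * (of_real (exp (u x)) * q x)))" by (rule norm_sum)
  also have "\<dots> \<le> (\<Sum>x\<in>S. exp U * (cmod (p x) * cmod (q x)))"
  proof (rule sum_mono)
    fix x assume x: "x \<in> S"
    show "cmod (cnj (p x) * (of_real (exp (u x)) * q x)) \<le> exp U * (cmod (p x) * cmod (q x))"
    proof (cases "p x = 0 \<or> q x = 0")
      case False
      then have "exp (u x) \<le> exp U" using assms[OF x] by simp
      moreover have "cmod (cnj (p x) * (of_real (exp (u x)) * q x)) = exp (u x) * (cmod (p x) * cmod (q x))"
        by (simp add: norm_mult)
      ultimately show ?thesis by (simp add: mult_right_mono)
    qed auto
  qed
  also have "\<dots> \<le> exp U * (L2_set (\<lambda>x. cmod (p x)) S * L2_set (\<lambda>x. cmod (q x)) S)"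
    unfolding sum_distrib_left[symmetric]
    using L2_set_mult_ineq[of "\<lambda>x. cmod (p x)" "\<lambda>x. cmod (q x)" S] by (intro mult_left_mono) auto
  finally show ?thesis .
qed

text \<open>In the application \<open>v = e\<^sup>w g\<close> for the solution \<open>g\<close> of \<open>H g = h\<close>, and the hypothesis is the coercivity
  of \<open>H\<close> conjugated by \<open>e\<^sup>w\<close>.\<close>

lemma weighted_decay:
  assumes \<gamma>: "\<gamma> > 0"
    and coercive: "\<gamma> * (\<Sum>x\<in>S. (cmod (v x))^2) \<le> Re (\<Sum>x\<in>S. cnj (of_real (exp (w x)) * v x) * h x)"
    and A: "\<And>x. x \<in> S \<Longrightarrow> h x \<noteq> 0 \<Longrightarrow> w x \<le> A"
    and B: "\<And>x. x \<in> S \<Longrightarrow> f x \<noteq> 0 \<Longrightarrow> B \<le> w x"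
  shows "cmod (\<Sum>x\<in>S. cnj (f x) * (of_real (exp (- w x)) * v x))
       \<le> exp (A - B) / \<gamma> * L2_set (\<lambda>x. cmod (f x)) S * L2_set (\<lambda>x. cmod (h x)) S"
proof -
  define nv where "nv = L2_set (\<lambda>x. cmod (v x)) S"
  define nf where "nf = L2_set (\<lambda>x. cmod (f x)) S"
  define nh where "nh = L2_set (\<lambda>x. cmod (h x)) S"
  have nonneg: "nv \<ge> 0" "nf \<ge> 0" "nh \<ge> 0" unfolding nv_def nf_def nh_def by (auto intro: L2_set_nonneg)
  have "(\<Sum>x\<in>S. cnj (of_real (exp (w x)) * v x) * h x) = (\<Sum>x\<in>S. cnj (v x) * (of_real (exp (w x)) * h x))"
    by (simp add: mult_ac)
  moreover have "(\<Sum>x\<in>S. (cmod (v x))^2) = nv^2" unfolding nv_def L2_set_def by (simp add: sum_nonneg)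
  ultimately have "\<gamma> * nv^2 \<le> Re (\<Sum>x\<in>S. cnj (v x) * (of_real (exp (w x)) * h x))"
    using coercive by simp
  also have "\<dots> \<le> exp A * (nv * nh)"
    unfolding nv_def nh_def
    by (rule order_trans[OF complex_Re_le_cmod norm_sum_cnj_weighted_le]) (use A in auto)
  finally have "\<gamma> * nv \<le> exp A * nh"
    using nonneg by (cases "nv = 0") (simp_all add: power2_eq_square algebra_simps)
  then have nv: "nv \<le> exp A * nh / \<gamma>" using \<gamma> by (simp add: field_simps)
  have "cmod (\<Sum>x\<in>S. cnj (f x) * (of_real (exp (- w x)) * v x)) \<le> exp (- B) * (nf * nv)"
    unfolding nf_def nv_def by (rule norm_sum_cnj_weighted_le) (use B in force)
  also have "\<dots> \<le> exp (- B) * (nf * (exp A * nh / \<gamma>))"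
    using nv nonneg by (intro mult_left_mono) auto
  also have "\<dots> = exp (A - B) / \<gamma> * nf * nh" by (simp add: exp_diff exp_minus field_simps)
  finally show ?thesis unfolding nf_def nh_def .
qed

lemma cmod_inner_L2_le:
  fixes f g h :: "('n::finite \<Rightarrow> int) \<Rightarrow> complex"
  assumes "eta > 0"
    and "cmod (\<Sum>x\<in>S. cnj (f x) * g x) \<le> C * L2_set (\<lambda>x. cmod (f x)) S * L2_set (\<lambda>x. cmod (h x)) S"
  shows "cmod (inner_L2 eta S f g) \<le> C * norm_L2 eta S f * norm_L2 eta S h"
proof -
  have norm: "norm_L2 eta S p = sqrt (eta ^ CARD('n)) * L2_set (\<lambda>x. cmod (p x)) S" for p
  proof -
    have "Re (inner_L2 eta S p p) = eta ^ CARD('n) * (\<Sum>x\<in>S. (cmod (p x))^2)"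
      unfolding inner_L2_def by (simp only: Re_of_real_mult Re_sum Re_cnj_self)
    then show ?thesis unfolding norm_L2_def L2_set_def by (simp add: real_sqrt_mult)
  qed
  have "cmod (inner_L2 eta S f g) = eta ^ CARD('n) * cmod (\<Sum>x\<in>S. cnj (f x) * g x)"
    unfolding inner_L2_def using assms(1) by (simp add: norm_mult norm_power del: of_real_power)
  also have "\<dots> \<le> eta ^ CARD('n) * (C * L2_set (\<lambda>x. cmod (f x)) S * L2_set (\<lambda>x. cmod (h x)) S)"
    using assms by (intro mult_left_mono) auto
  also have "\<dots> = C * norm_L2 eta S f * norm_L2 eta S h"
    using assms(1) by (simp add: norm algebra_simps flip: real_sqrt_mult)
  finally show ?thesis .
qed

text \<open>Chosen so that the errors caused by the weight cost at most \<open>a / (4 * 4 ^ d)\<close> of the coercivity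
  constant \<open>3 * a / (4 * 4 ^ d)\<close> of \<open>Hop\<close>.\<close>

definition decay_rate :: "real \<Rightarrow> nat \<Rightarrow> real" where
  "decay_rate a d = a / (16 * real d * 4 ^ d)"

lemma decay_rate_bounds:
  assumes "0 < a" "a \<le> 1" "d \<ge> 1"
  shows "0 < decay_rate a d" "decay_rate a d \<le> 1" "real d * decay_rate a d \<le> 1"
    and "2 * real d * (decay_rate a d)^2 + 2 * (real d * decay_rate a d) \<le> a / (4 * 4 ^ d)"
proof -
  let ?\<alpha> = "decay_rate a d"
  have K: "(1::real) \<le> 4 ^ d" by simp
  show pos: "0 < ?\<alpha>" using assms unfolding decay_rate_def by simp
  have d\<alpha>: "real d * ?\<alpha> = a / (16 * 4 ^ d)" using assms unfolding decay_rate_def by simp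
  have "a \<le> 16 * 4 ^ d" using assms K by linarith
  then show d\<alpha>1: "real d * ?\<alpha> \<le> 1" unfolding d\<alpha> by simp
  have "?\<alpha> \<le> real d * ?\<alpha>" using mult_right_mono[of 1 "real d" ?\<alpha>] pos assms(3) by simp
  then show "?\<alpha> \<le> 1" using d\<alpha>1 by linarith
  with pos have "?\<alpha>^2 \<le> ?\<alpha>" by (simp add: power2_eq_square mult_left_le_one_le)
  then have "2 * real d * ?\<alpha>^2 + 2 * (real d * ?\<alpha>) \<le> 4 * (real d * ?\<alpha>)"
    using assms(3) by (simp add: mult_left_mono)
  then show "2 * real d * ?\<alpha>^2 + 2 * (real d * ?\<alpha>) \<le> a / (4 * 4 ^ d)" unfolding d\<alpha> by simp
qed

definition decay_weight :: "real \<Rightarrow> nat \<Rightarrow> nat \<Rightarrow> ('n::finite \<Rightarrow> int) \<Rightarrow> ('n \<Rightarrow> int) \<Rightarrow> real" where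
  "decay_weight a L k y' x = decay_rate a CARD('n) * l1_weight (real L ^ k) y' x"

lemma decay_weight_self [simp]: "decay_weight a L k y' y' = 0"
  unfolding decay_weight_def by simp

lemma abs_decay_weight_diff:
  fixes x z :: "'n::finite \<Rightarrow> int"
  assumes "0 \<le> a"
  shows "\<bar>decay_weight a L k y' x - decay_weight a L k y' z\<bar>
       = decay_rate a CARD('n) * \<bar>l1_weight (real L ^ k) y' x - l1_weight (real L ^ k) y' z\<bar>"
proof -
  have "0 \<le> decay_rate a CARD('n)" using assms by (simp add: decay_rate_def)
  then show ?thesis by (simp add: decay_weight_def abs_mult right_diff_distrib[symmetric])
qed

lemma abs_decay_weight_sh_le:
  fixes x :: "'n::finite \<Rightarrow> int"
  assumes "L > 0" "0 \<le> a"
  shows "\<bar>decay_weight a L k y' x - decay_weight a L k y' (sh \<mu> x)\<bar> \<le> decay_rate a CARD('n) / real L ^ k"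
  using mult_left_mono[OF abs_l1_weight_sh_le[of "real L ^ k" y' x \<mu>], of "decay_rate a CARD('n)"] assms
  by (simp add: abs_decay_weight_diff decay_rate_def)

lemma abs_decay_weight_cube_le:
  assumes "L > 0" "0 \<le> a" "x \<in> cube c (int L ^ k)" "z \<in> cube c (int L ^ k)"
  shows "\<bar>decay_weight a L k y' x - decay_weight a L k y' (z::'n::finite \<Rightarrow> int)\<bar>
       \<le> real CARD('n) * decay_rate a CARD('n)"
  using mult_left_mono[OF abs_l1_weight_cube_le[OF _ assms(3,4), of y'], of "decay_rate a CARD('n)"] assms
  by (simp add: abs_decay_weight_diff decay_rate_def mult.commute)

lemma Gk_conj_coercive:
  fixes f' :: "('n::finite \<Rightarrow> int) \<Rightarrow> complex" and y' :: "'n \<Rightarrow> int"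
  assumes a: "0 < a" "a \<le> 1" and L: "L > 1" "1 \<le> k" "k \<le> m" and mu: "mu0 \<ge> 0"
    and f': "f' \<in> L2 (Omega L m)"
  defines "w \<equiv> decay_weight a L k y'" and "g \<equiv> Gk a mu0 L k m f'"
  shows "a / (2 * 4 ^ CARD('n)) * (\<Sum>x\<in>Omega L m. (cmod (of_real (exp (w x)) * g x))^2)
       \<le> Re (\<Sum>x\<in>Omega L m. cnj (of_real (exp (w x)) * (of_real (exp (w x)) * g x)) * f' x)"
proof -
  define \<alpha> where "\<alpha> = decay_rate a CARD('n)"
  have L0: "L > 0" using L by simp
  have \<alpha>: "\<alpha> \<le> 1" "real CARD('n) * \<alpha> \<le> 1"
    "2 * real CARD('n) * \<alpha>^2 + 2 * (real CARD('n) * \<alpha>) \<le> a / (4 * 4 ^ CARD('n))"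
    unfolding \<alpha>_def using decay_rate_bounds[OF a, of "CARD('n)"] by auto
  have "(\<lambda>z. complex_of_real (exp (- w z)) * (complex_of_real (exp (w z)) * g z)) = g"
    by (simp add: fun_eq_iff exp_minus field_simps)
  moreover have "a / (2 * 4 ^ CARD('n)) * (\<Sum>x\<in>Omega L m. (cmod (of_real (exp (w x)) * g x))^2)
    \<le> Re (\<Sum>x\<in>Omega L m. cnj (of_real (exp (w x)) * (of_real (exp (w x)) * g x))
          * Hop a mu0 L k m (\<lambda>z. of_real (exp (- w z)) * (of_real (exp (w z)) * g z)) x)"
  proof (rule Hop_conj_coercive[OF L mu a _ \<alpha>(1) _ _ _ \<alpha>(3)])
    show "\<bar>w x - w (sh \<mu> x)\<bar> \<le> \<alpha> / real L ^ k" for x \<mu>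
      unfolding w_def \<alpha>_def using abs_decay_weight_sh_le[OF L0 less_imp_le[OF a(1)]] .
    show "\<bar>w x - w z\<bar> \<le> real CARD('n) * \<alpha>" if "x \<in> Block L k c" "z \<in> Block L k c" for c x z
      unfolding w_def \<alpha>_def using abs_decay_weight_cube_le[OF L0 less_imp_le[OF a(1)]] that by (simp add: Block_eq_cube)
  qed (use \<alpha> decay_rate_bounds[OF a, of "CARD('n)"] in \<open>auto simp: \<alpha>_def\<close>)
  ultimately show ?thesis using Gk_inverse(2)[OF L mu a f'] unfolding g_def by simp
qed

lemma Gk_decay:
  fixes f f' :: "('n::finite \<Rightarrow> int) \<Rightarrow> complex"
  assumes a: "0 < a" "a \<le> 1" and L: "L > 1" "1 \<le> k" "k \<le> m" and mu: "mu0 \<ge> 0"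
    and f': "f' \<in> L2 (Omega L m)"
    and supp: "{x. f x \<noteq> 0} \<subseteq> Block L k y" "{x. f' x \<noteq> 0} \<subseteq> Block L k y'"
  defines "\<alpha> \<equiv> decay_rate a CARD('n)"
  shows "cmod (inner_L2 (eta_of L k) (Omega L m) f (Gk a mu0 L k m f'))
       \<le> 2 * 4 ^ CARD('n) / a * exp (2 * real CARD('n) * \<alpha>) * exp (- \<alpha> * latdist (eta_of L k) y y')
         * norm_L2 (eta_of L k) (Omega L m) f * norm_L2 (eta_of L k) (Omega L m) f'"
proof -
  define d where "d = real CARD('n)"
  define R where "R = latdist (eta_of L k) y y'"
  define g where "g = Gk a mu0 L k m f'"
  define w where "w = decay_weight a L k y'"
  have L0: "L > 0" using L by simp
  have corner_in_cube: "c \<in> cube c (int L ^ k)" for c using L0 by (simp add: cube_def)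
  have "w x \<le> d * \<alpha>" if "f' x \<noteq> 0" for x
  proof -
    have "x \<in> cube y' (int L ^ k)" using supp(2) that by (auto simp: Block_eq_cube)
    from abs_decay_weight_cube_le[OF L0 _ this corner_in_cube, of a y'] a show ?thesis
      unfolding w_def d_def \<alpha>_def by (simp add: abs_le_iff)
  qed
  moreover have "\<alpha> * (R - d) \<le> w x" if "f x \<noteq> 0" for x
  proof -
    have "\<alpha> * R \<le> w y"
      using latdist_le_l1_weight[of "real L ^ k" y y'] decay_rate_bounds(1)[OF a] L0
      unfolding w_def R_def \<alpha>_def decay_weight_def eta_of_eq[OF L0] by (simp add: mult_left_mono)
    moreover have "x \<in> cube y (int L ^ k)" using supp(1) that by (auto simp: Block_eq_cube)
    moreover note abs_decay_weight_cube_le[OF L0 _ this corner_in_cube, of a y']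
    ultimately show ?thesis using a unfolding w_def d_def \<alpha>_def by (simp add: abs_le_iff algebra_simps)
  qed
  ultimately have "cmod (\<Sum>x\<in>Omega L m. cnj (f x) * (of_real (exp (- w x)) * (of_real (exp (w x)) * g x)))
      \<le> exp (d * \<alpha> - \<alpha> * (R - d)) / (a / (2 * 4 ^ CARD('n)))
        * L2_set (\<lambda>x. cmod (f x)) (Omega L m) * L2_set (\<lambda>x. cmod (f' x)) (Omega L m)"
    using a Gk_conj_coercive[OF a L mu f', of y'] unfolding w_def g_def by (intro weighted_decay) auto
  moreover have "exp (d * \<alpha> - \<alpha> * (R - d)) / (a / (2 * 4 ^ CARD('n)))
      = 2 * 4 ^ CARD('n) / a * exp (2 * d * \<alpha>) * exp (- \<alpha> * R)"
    by (simp add: exp_add[symmetric] algebra_simps)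
  moreover have "(\<Sum>x\<in>Omega L m. cnj (f x) * (of_real (exp (- w x)) * (of_real (exp (w x)) * g x)))
      = (\<Sum>x\<in>Omega L m. cnj (f x) * g x)"
    by (simp add: exp_minus field_simps)
  ultimately have "cmod (\<Sum>x\<in>Omega L m. cnj (f x) * g x)
      \<le> 2 * 4 ^ CARD('n) / a * exp (2 * d * \<alpha>) * exp (- \<alpha> * R)
        * L2_set (\<lambda>x. cmod (f x)) (Omega L m) * L2_set (\<lambda>x. cmod (f' x)) (Omega L m)"
    by (simp only:)
  moreover have "eta_of L k > 0" using L0 by (simp add: eta_of_eq)
  ultimately show ?thesis unfolding R_def d_def g_def by (intro cmod_inner_L2_le)
qed

theorem mainTheorem3:
  fixes a :: real
  assumes "0 < a" and "a \<le> 1"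
  shows "\<exists>c>0. \<exists>c1>0. \<forall>(L::nat) (k::nat) (m::nat) (mu0::real) (y::'n::finite \<Rightarrow> int) y'
            (f::('n \<Rightarrow> int) \<Rightarrow> complex) f'.
     odd L \<and> L > 1 \<and> k \<ge> 1 \<and> m \<ge> k \<and> mu0 \<ge> 0 \<and>
     y \<in> Omega_j L m k \<and> y' \<in> Omega_j L m k \<and>
     f \<in> L2 (Omega L m) \<and> f' \<in> L2 (Omega L m) \<and>
     {x. f x \<noteq> 0} \<subseteq> Block L k y \<and> {x. f' x \<noteq> 0} \<subseteq> Block L k y'
     \<longrightarrow> cmod (inner_L2 (eta_of L k) (Omega L m) f (Gk a mu0 L k m f'))
         \<le> c * exp (- c1 * latdist (eta_of L k) y y')
             * norm_L2 (eta_of L k) (Omega L m) f * norm_L2 (eta_of L k) (Omega L m) f'"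
proof -
  define \<alpha> where "\<alpha> = decay_rate a CARD('n)"
  define c where "c = 2 * 4 ^ CARD('n) / a * exp (2 * real CARD('n) * \<alpha>)"
  have "c > 0" "\<alpha> > 0"
    unfolding c_def \<alpha>_def using assms decay_rate_bounds[OF assms, of "CARD('n)"] by auto
  moreover have "cmod (inner_L2 (eta_of L k) (Omega L m) f (Gk a mu0 L k m f'))
         \<le> c * exp (- \<alpha> * latdist (eta_of L k) y y')
             * norm_L2 (eta_of L k) (Omega L m) f * norm_L2 (eta_of L k) (Omega L m) f'"
    if "L > 1" "k \<ge> 1" "m \<ge> k" "mu0 \<ge> 0" "f' \<in> L2 (Omega L m)"
      "{x. f x \<noteq> 0} \<subseteq> Block L k y" "{x. f' x \<noteq> 0} \<subseteq> Block L k y'"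
    for L k m mu0 and y y' :: "'n \<Rightarrow> int" and f f' :: "('n \<Rightarrow> int) \<Rightarrow> complex"
    using Gk_decay[OF assms that] unfolding c_def \<alpha>_def by simp
  ultimately show ?thesis by blast
qed

end
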